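(* Let $p\ge7$ be prime, $F$ a number field with $\mathbb{Q}(p)\subseteq F$, and $c_p\in G_{\mathbb{Q}}$ an element acting nontrivially on $\mathbb{Q}(p)$. Let $\overline\rho:G_F\to\mathrm{PGL}_2(\mathbb{F}_p)$ be a continuous homomorphism with cyclotomic determinant (so $\overline\rho$ takes values in $\mathrm{PSL}_2(\mathbb{F}_p)$). Then $X_{\overline\rho}(p)$ is defined over $\mathbb{Q}$ if and only if there exist $g\in\mathrm{PGL}_2(\mathbb{F}_p)\setminus\mathrm{PSL}_2(\mathbb{F}_p)$ and a homomorphism $\overline r:G_{\mathbb{Q}(p)}\to\mathrm{PSL}_2(\mathbb{F}_p)$ with $\overline r|_{G_F}=\overline\rho$, such that $\overline r(c_p^2)=g^2$ and $\overline r(c_p^{-1}\sigma c_p)=g^{-1}\overline r(\sigma)g$ for all $\sigma\in G_{\mathbb{Q}(p)}$.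
   Context: $G_K=\mathrm{Gal}(\overline{\mathbb{Q}}/K)$. $\mathbb{Q}(p)$ is the unique quadratic subfield of $\mathbb{Q}(\zeta_p)$. $\overline\varepsilon_p^{\mathrm{pr}}$ is the mod-$p$ cyclotomic character composed with $\mathbb{F}_p^\times\to\mathbb{F}_p^\times/\mathbb{F}_p^{\times2}$; determinants on $\mathrm{PGL}_2(\mathbb{F}_p)$ take values in $\mathbb{F}_p^\times/\mathbb{F}_p^{\times2}$ and $\mathrm{PSL}_2(\mathbb{F}_p)$ is the kernel; "cyclotomic determinant" means $\det\overline\rho=\overline\varepsilon_p^{\mathrm{pr}}$ on $G_F$. $\overline\rho^\vee(\sigma)=\overline\rho(\sigma^{-1})^t$. Fix a non-residue $v\in\mathbb{F}_p^\times$, $V=\begin{pmatrix}0&v\\-1&0\end{pmatrix}$, and let $X(p)$ be the model over $\mathbb{Q}$ of the principal modular curve of level $p$ given by the subgroup $\mathbb{F}_p^\times I\cup\mathbb{F}_p^\times V\subseteq\mathrm{GL}_2(\mathbb{F}_p)$; $\mathrm{Aut}_{\overline{\mathbb{Q}}}X(p)\cong\mathrm{PSL}_2(\mathbb{F}_p)$ with $G_{\mathbb{Q}}$ acting by $\sigma\cdot x=\eta(\sigma)x\eta(\sigma)^{-1}$, where $\eta(\sigma)=1$ if $\sigma$ fixes $\mathbb{Q}(p)$ and $\eta(\sigma)=V$ otherwise. $\xi(\sigma)=\overline\rho^\vee(\sigma)\eta(\sigma)$ is a $1$-cocycle $G_F\to\mathrm{PSL}_2(\mathbb{F}_p)$,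 $X_{\overline\rho}(p)$ is the corresponding twist of $X(p)$ over $F$, and it is "defined over $\mathbb{Q}$" if $[\xi]$ lies in the image of restriction $H^1(G_{\mathbb{Q}},\mathrm{PSL}_2(\mathbb{F}_p))\to H^1(G_F,\mathrm{PSL}_2(\mathbb{F}_p))$. *)

theory Defs
  imports "HOL-Algebra.Algebraic_Closure_Type" "HOL-Number_Theory.Number_Theory"
begin

type_synonym qbar = "rat alg_closure"

definition is_subfield :: "qbar set \<Rightarrow> bool" where
  "is_subfield K \<longleftrightarrow> 0 \<in> K \<and> 1 \<in> K \<and>
     (\<forall>x\<in>K. \<forall>y\<in>K. x + y \<in> K \<and> x - y \<in> K \<and> x * y \<in> K) \<and>
     (\<forall>x\<in>K. inverse x \<in> K)"

definition number_field :: "qbar set \<Rightarrow> bool" where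
  "number_field K \<longleftrightarrow> is_subfield K \<and>
     (\<exists>S. finite S \<and> K \<subseteq> {\<Sum>s\<in>S. of_rat (c s) * s | c. True})"

definition quadratic_field :: "qbar set \<Rightarrow> bool" where
  "quadratic_field K \<longleftrightarrow> is_subfield K \<and>
     (\<exists>a. a \<notin> \<rat> \<and> K = {of_rat x + of_rat y * a | x y. True})"

definition gen_field :: "qbar set \<Rightarrow> qbar set" where
  "gen_field S = \<Inter>{K. is_subfield K \<and> S \<subseteq> K}"

definition zeta :: "nat \<Rightarrow> qbar" where
  "zeta p = (SOME z. z ^ p = 1 \<and> z \<noteq> 1)"

definition cyclotomic_field :: "nat \<Rightarrow> qbar set" where
  "cyclotomic_field p = gen_field {zeta p}"

text \<open>Q(p): the unique quadratic subfield of Q(zeta_p).\<close>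
definition Qp :: "nat \<Rightarrow> qbar set" where
  "Qp p = (THE K. quadratic_field K \<and> K \<subseteq> cyclotomic_field p)"

definition GQ :: "(qbar \<Rightarrow> qbar) set" where
  "GQ = {\<sigma>. bij \<sigma> \<and> \<sigma> 1 = 1 \<and> (\<forall>x y. \<sigma> (x + y) = \<sigma> x + \<sigma> y \<and> \<sigma> (x * y) = \<sigma> x * \<sigma> y)}"

definition Gal :: "qbar set \<Rightarrow> (qbar \<Rightarrow> qbar) set" where
  "Gal K = {\<sigma> \<in> GQ. \<forall>x\<in>K. \<sigma> x = x}"

text \<open>Continuity (Krull topology on H, discrete target): locally constant, basic
  neighbourhoods of sigma being the sets of tau agreeing with sigma on a finite set.\<close>
definition krull_continuous :: "(qbar \<Rightarrow> qbar) set \<Rightarrow> ((qbar \<Rightarrow> qbar) \<Rightarrow> 'b) \<Rightarrow> bool" where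
  "krull_continuous H f \<longleftrightarrow> (\<forall>\<sigma>\<in>H. \<exists>S. finite S \<and>
      (\<forall>\<tau>\<in>H. (\<forall>x\<in>S. \<tau> x = \<sigma> x) \<longrightarrow> f \<tau> = f \<sigma>))"

definition cyc_char :: "nat \<Rightarrow> (qbar \<Rightarrow> qbar) \<Rightarrow> int" where
  "cyc_char p \<sigma> = (SOME a. a \<in> {1..<int p} \<and> \<sigma> (zeta p) = zeta p ^ nat a)"

type_synonym m2 = "int \<times> int \<times> int \<times> int"  (* (a,b,c,d) = [[a,b],[c,d]] *)

fun mmul :: "nat \<Rightarrow> m2 \<Rightarrow> m2 \<Rightarrow> m2" where
  "mmul p (a,b,c,d) (e,f,g,h) =
     ((a*e+b*g) mod int p, (a*f+b*h) mod int p, (c*e+d*g) mod int p, (c*f+d*h) mod int p)"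

fun mdet :: "nat \<Rightarrow> m2 \<Rightarrow> int" where
  "mdet p (a,b,c,d) = (a*d - b*c) mod int p"

fun smul :: "nat \<Rightarrow> int \<Rightarrow> m2 \<Rightarrow> m2" where
  "smul p l (a,b,c,d) = ((l*a) mod int p, (l*b) mod int p, (l*c) mod int p, (l*d) mod int p)"

fun madj :: "nat \<Rightarrow> m2 \<Rightarrow> m2" where
  "madj p (a,b,c,d) = (d mod int p, (-b) mod int p, (-c) mod int p, a mod int p)"

fun mtrans :: "m2 \<Rightarrow> m2" where
  "mtrans (a,b,c,d) = (a,c,b,d)"

definition GL2 :: "nat \<Rightarrow> m2 set" where
  "GL2 p = {(a,b,c,d). a \<in> {0..<int p} \<and> b \<in> {0..<int p} \<and> c \<in> {0..<int p} \<and>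
                       d \<in> {0..<int p} \<and> mdet p (a,b,c,d) \<noteq> 0}"

text \<open>An element of PGL_2(F_p) is the class of a matrix modulo nonzero scalars.\<close>
definition pcl :: "nat \<Rightarrow> m2 \<Rightarrow> m2 set" where
  "pcl p A = {smul p l A | l. l \<in> {1..<int p}}"

definition PGL2 :: "nat \<Rightarrow> m2 set set" where
  "PGL2 p = pcl p ` GL2 p"

definition rep :: "m2 set \<Rightarrow> m2" where
  "rep M = (SOME A. A \<in> M)"

definition pmul :: "nat \<Rightarrow> m2 set \<Rightarrow> m2 set \<Rightarrow> m2 set" where
  "pmul p M N = pcl p (mmul p (rep M) (rep N))"

definition pone :: "nat \<Rightarrow> m2 set" where
  "pone p = pcl p (1, 0, 0, 1)"

definition pinv :: "nat \<Rightarrow> m2 set \<Rightarrow> m2 set" where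
  "pinv p M = pcl p (madj p (rep M))"

definition ptrans :: "nat \<Rightarrow> m2 set \<Rightarrow> m2 set" where
  "ptrans p M = pcl p (mtrans (rep M))"

text \<open>PSL_2(F_p): kernel of det : PGL_2(F_p) \<rightarrow> F_p^*/F_p^*2.\<close>
definition PSL2 :: "nat \<Rightarrow> m2 set set" where
  "PSL2 p = {M \<in> PGL2 p. QuadRes (int p) (mdet p (rep M))}"

definition Vmat :: "nat \<Rightarrow> int \<Rightarrow> m2 set" where
  "Vmat p v = pcl p (0, v mod int p, (-1) mod int p, 0)"

definition eta :: "nat \<Rightarrow> int \<Rightarrow> (qbar \<Rightarrow> qbar) \<Rightarrow> m2 set" where
  "eta p v \<sigma> = (if \<sigma> \<in> Gal (Qp p) then pone p else Vmat p v)"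

text \<open>Galois action on Aut M(p) = PSL_2(F_p): x \<mapsto> eta(sigma) x eta(sigma)^-1.\<close>
definition gact :: "nat \<Rightarrow> int \<Rightarrow> (qbar \<Rightarrow> qbar) \<Rightarrow> m2 set \<Rightarrow> m2 set" where
  "gact p v \<sigma> x = pmul p (pmul p (eta p v \<sigma>) x) (pinv p (eta p v \<sigma>))"

definition rho_dual :: "nat \<Rightarrow> ((qbar \<Rightarrow> qbar) \<Rightarrow> m2 set) \<Rightarrow> (qbar \<Rightarrow> qbar) \<Rightarrow> m2 set" where
  "rho_dual p \<rho> \<sigma> = ptrans p (\<rho> (inv_into UNIV \<sigma>))"

definition xi :: "nat \<Rightarrow> int \<Rightarrow> ((qbar \<Rightarrow> qbar) \<Rightarrow> m2 set) \<Rightarrow> (qbar \<Rightarrow> qbar) \<Rightarrow> m2 set" where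
  "xi p v \<rho> \<sigma> = pmul p (rho_dual p \<rho> \<sigma>) (eta p v \<sigma>)"

definition cocycle :: "nat \<Rightarrow> int \<Rightarrow> (qbar \<Rightarrow> qbar) set \<Rightarrow> ((qbar \<Rightarrow> qbar) \<Rightarrow> m2 set) \<Rightarrow> bool" where
  "cocycle p v H z \<longleftrightarrow> krull_continuous H z \<and> (\<forall>\<sigma>\<in>H. z \<sigma> \<in> PSL2 p) \<and>
     (\<forall>\<sigma>\<in>H. \<forall>\<tau>\<in>H. z (\<sigma> \<circ> \<tau>) = pmul p (z \<sigma>) (gact p v \<sigma> (z \<tau>)))"

definition cohomologous :: "nat \<Rightarrow> int \<Rightarrow> (qbar \<Rightarrow> qbar) set \<Rightarrow> ((qbar \<Rightarrow> qbar) \<Rightarrow> m2 set)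
     \<Rightarrow> ((qbar \<Rightarrow> qbar) \<Rightarrow> m2 set) \<Rightarrow> bool" where
  "cohomologous p v H z w \<longleftrightarrow> (\<exists>b\<in>PSL2 p. \<forall>\<sigma>\<in>H.
       w \<sigma> = pmul p (pmul p (pinv p b) (z \<sigma>)) (gact p v \<sigma> b))"

text \<open>X_rho(p) defined over Q: [xi] lies in the image of restriction
  H^1(G_Q, PSL_2) \<rightarrow> H^1(G_F, PSL_2).\<close>
definition defined_over_Q :: "nat \<Rightarrow> int \<Rightarrow> qbar set \<Rightarrow> ((qbar \<Rightarrow> qbar) \<Rightarrow> m2 set) \<Rightarrow> bool" where
  "defined_over_Q p v F \<rho> \<longleftrightarrow> (\<exists>z. cocycle p v GQ z \<and> cohomologous p v (Gal F) z (xi p v \<rho>))"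

end

theory Submission
  imports Defs
begin

text \<open>
  With \<open>\<eta> : G\<^sub>\<rat> \<rightarrow> PGL\<^sub>2(\<bbbF>\<^sub>p)\<close> the twisting homomorphism (trivial on \<open>G\<^bsub>\<rat>(p)\<^esub>\<close>, equal to
  \<open>V \<notin> PSL\<^sub>2\<close> off it), a map \<open>z : G\<^sub>\<rat> \<rightarrow> PSL\<^sub>2\<close> is a cocycle for the twisted action iff
  \<open>\<sigma> \<mapsto> z(\<sigma>) \<eta>(\<sigma>)\<close> is a homomorphism, and that homomorphism then has cyclotomic determinant.
  Transpose-inverse is conjugation by \<open>J = (0 1; -1 0) \<in> PSL\<^sub>2\<close>, so \<open>\<xi>\<close> is conjugate to \<open>\<rho>\<close> on
  \<open>G\<^sub>F\<close>; hence \<open>X\<^sub>\<rho>(p)\<close> is defined over \<open>\<rat>\<close> iff \<open>\<rho>\<close> extends to some \<open>\<psi> : G\<^sub>\<rat> \<rightarrow> PGL\<^sub>2\<close>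
  with cyclotomic determinant (continuity is automatic, \<open>\<psi>\<close> agreeing with \<open>\<rho>\<close> on the open
  subgroup \<open>G\<^sub>F\<close>). As \<open>G\<^bsub>\<rat>(p)\<^esub>\<close> has index two with \<open>c\<close> in the other coset, such \<open>\<psi>\<close> are exactly
  the extensions \<open>c \<mapsto> g\<close> of homomorphisms \<open>r\<close> on \<open>G\<^bsub>\<rat>(p)\<^esub>\<close> with \<open>r(c\<^sup>2) = g\<^sup>2\<close> and
  \<open>r(c\<inverse>\<sigma>c) = g\<inverse>r(\<sigma>)g\<close>.

  Most of the work is identifying \<open>\<rat>(p)\<close>: the quadratic Gauss sum generates a quadratic subfield
  of \<open>\<rat>(\<zeta>\<^sub>p)\<close>, and it is the only one since \<open>Gal(\<rat>(\<zeta>\<^sub>p)/\<rat>)\<close> is cyclic (the cyclotomic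
  polynomial being irreducible by Eisenstein's criterion).
\<close>

section \<open>Index-two subgroups and twisted homomorphisms\<close>

definition index_two_subgroup :: "'a set \<Rightarrow> ('a, 'b) monoid_scheme \<Rightarrow> bool" where
  "index_two_subgroup H G \<longleftrightarrow> subgroup H G \<and> H \<noteq> carrier G \<and>
     (\<forall>x \<in> carrier G - H. \<forall>y \<in> carrier G - H. x \<otimes>\<^bsub>G\<^esub> y \<in> H)"

lemma index_two_subgroup_is_subgroup: "index_two_subgroup H G \<Longrightarrow> subgroup H G"
  unfolding index_two_subgroup_def by simp

context group
begin

lemma inv_mult_cancel_left: "x \<in> carrier G \<Longrightarrow> y \<in> carrier G \<Longrightarrow> inv x \<otimes> (x \<otimes> y) = y"
  by (simp flip: m_assoc)

lemma mult_inv_cancel_left: "x \<in> carrier G \<Longrightarrow> y \<in> carrier G \<Longrightarrow> x \<otimes> (inv x \<otimes> y) = y"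
  by (simp flip: m_assoc)

lemma inv_mult_cancel_right: "x \<in> carrier G \<Longrightarrow> y \<in> carrier G \<Longrightarrow> y \<otimes> inv x \<otimes> x = y"
  by (simp add: m_assoc)

lemma subgroup_mult_notin_right:
  assumes "subgroup H G" "x \<in> H" "y \<in> carrier G" "y \<notin> H"
  shows "x \<otimes> y \<notin> H"
proof
  assume "x \<otimes> y \<in> H"
  with assms have "inv x \<otimes> (x \<otimes> y) \<in> H" by (meson subgroup.m_closed subgroup.m_inv_closed)
  with assms show False by (simp add: subgroup.mem_carrier flip: m_assoc)
qed

lemma subgroup_mult_notin_left:
  assumes "subgroup H G" "x \<in> carrier G" "x \<notin> H" "y \<in> H"
  shows "x \<otimes> y \<notin> H"
proof
  assume "x \<otimes> y \<in> H"
  with assms have "(x \<otimes> y) \<otimes> inv y \<in> H" by (meson subgroup.m_closed subgroup.m_inv_closed)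
  with assms show False by (simp add: subgroup.mem_carrier m_assoc)
qed

lemma subgroup_inv_notin:
  assumes "subgroup H G" "x \<in> carrier G" "x \<notin> H"
  shows "inv x \<notin> H"
  using assms by (metis inv_inv subgroup.m_inv_closed)

lemma subgroup_conj_in_iff:
  assumes H: "subgroup H G" and u: "u \<in> H" and x: "x \<in> carrier G"
  shows "inv u \<otimes> x \<otimes> u \<in> H \<longleftrightarrow> x \<in> H"
proof
  have u': "u \<in> carrier G" "inv u \<in> H" using subgroup.mem_carrier[OF H u] subgroup.m_inv_closed[OF H u] .
  assume conj: "inv u \<otimes> x \<otimes> u \<in> H"
  show "x \<in> H"
  proof (rule ccontr)
    assume "x \<notin> H"
    then have "inv u \<otimes> x \<notin> H" by (rule subgroup_mult_notin_right[OF H u'(2) x])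
    then have "inv u \<otimes> x \<otimes> u \<notin> H" using subgroup_mult_notin_left[OF H _ _ u] x u' by simp
    with conj show False by contradiction
  qed
qed (use u subgroup.m_closed[OF H] subgroup.m_inv_closed[OF H] in simp)

lemma index_two_mult_in:
  assumes "index_two_subgroup H G" "x \<in> carrier G - H" "y \<in> carrier G - H"
  shows "x \<otimes> y \<in> H"
  using assms(1) unfolding index_two_subgroup_def using assms(2,3) by simp

lemma index_two_inv_mult_in:
  assumes "index_two_subgroup H G" "x \<in> carrier G - H" "y \<in> carrier G - H"
  shows "inv x \<otimes> y \<in> H"
proof (rule index_two_mult_in[OF assms(1) _ assms(3)])
  show "inv x \<in> carrier G - H"
    using assms(2) subgroup_inv_notin[OF index_two_subgroup_is_subgroup[OF assms(1)]] by simp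
qed

lemma index_two_conj_in:
  assumes "index_two_subgroup H G" "c \<in> carrier G - H" "h \<in> H"
  shows "inv c \<otimes> h \<otimes> c \<in> H"
proof -
  have H: "subgroup H G" using index_two_subgroup_is_subgroup[OF assms(1)] .
  have "inv c \<otimes> h \<notin> H"
    using assms subgroup_mult_notin_left[OF H] subgroup_inv_notin[OF H] by (simp add: subgroup.mem_carrier)
  then show ?thesis
    using assms index_two_mult_in[OF assms(1)] by (simp add: subgroup.mem_carrier[OF H])
qed

text \<open>The right-hand side is the 1-cocycle condition for the action
  \<open>\<sigma> \<cdot> x = \<eta> \<sigma> \<otimes> x \<otimes> inv (\<eta> \<sigma>)\<close>.\<close>
lemma cocycle_iff_twisted_hom:
  assumes \<Gamma>: "group \<Gamma>" and \<eta>: "\<eta> \<in> hom \<Gamma> G" and z: "z \<in> carrier \<Gamma> \<rightarrow> carrier G"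
  shows "(\<lambda>\<sigma>. z \<sigma> \<otimes> \<eta> \<sigma>) \<in> hom \<Gamma> G \<longleftrightarrow>
    (\<forall>\<sigma>\<in>carrier \<Gamma>. \<forall>\<tau>\<in>carrier \<Gamma>. z (\<sigma> \<otimes>\<^bsub>\<Gamma>\<^esub> \<tau>) = z \<sigma> \<otimes> (\<eta> \<sigma> \<otimes> z \<tau> \<otimes> inv (\<eta> \<sigma>)))"
proof -
  interpret \<Gamma>: group \<Gamma> by (fact \<Gamma>)
  have eq: "z (\<sigma> \<otimes>\<^bsub>\<Gamma>\<^esub> \<tau>) \<otimes> \<eta> (\<sigma> \<otimes>\<^bsub>\<Gamma>\<^esub> \<tau>) = (z \<sigma> \<otimes> \<eta> \<sigma>) \<otimes> (z \<tau> \<otimes> \<eta> \<tau>) \<longleftrightarrow>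
      z (\<sigma> \<otimes>\<^bsub>\<Gamma>\<^esub> \<tau>) = z \<sigma> \<otimes> (\<eta> \<sigma> \<otimes> z \<tau> \<otimes> inv (\<eta> \<sigma>))"
    if "\<sigma> \<in> carrier \<Gamma>" "\<tau> \<in> carrier \<Gamma>" for \<sigma> \<tau>
  proof -
    have cl: "z \<sigma> \<in> carrier G" "z \<tau> \<in> carrier G" "z (\<sigma> \<otimes>\<^bsub>\<Gamma>\<^esub> \<tau>) \<in> carrier G"
      "\<eta> \<sigma> \<in> carrier G" "\<eta> \<tau> \<in> carrier G"
      using that z \<eta> by (auto intro: hom_in_carrier)
    have "(z \<sigma> \<otimes> \<eta> \<sigma>) \<otimes> (z \<tau> \<otimes> \<eta> \<tau>) = (z \<sigma> \<otimes> (\<eta> \<sigma> \<otimes> z \<tau> \<otimes> inv (\<eta> \<sigma>))) \<otimes> (\<eta> \<sigma> \<otimes> \<eta> \<tau>)"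
      using cl by (simp add: m_assoc inv_mult_cancel_left)
    then show ?thesis
      unfolding hom_mult[OF \<eta> that] using cl by (simp add: r_cancel)
  qed
  show ?thesis
    using z eq by (auto simp: hom_def Pi_iff intro: hom_in_carrier[OF \<eta>])
qed

lemma conj_hom:
  assumes "\<psi> \<in> hom \<Gamma> G" "b \<in> carrier G"
  shows "(\<lambda>\<sigma>. inv b \<otimes> \<psi> \<sigma> \<otimes> b) \<in> hom \<Gamma> G"
proof (rule homI)
  fix \<sigma> \<tau> assume "\<sigma> \<in> carrier \<Gamma>" "\<tau> \<in> carrier \<Gamma>"
  with assms show "inv b \<otimes> \<psi> (\<sigma> \<otimes>\<^bsub>\<Gamma>\<^esub> \<tau>) \<otimes> b = inv b \<otimes> \<psi> \<sigma> \<otimes> b \<otimes> (inv b \<otimes> \<psi> \<tau> \<otimes> b)"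
    by (simp add: hom_mult hom_in_carrier m_assoc mult_inv_cancel_left)
qed (use assms in \<open>simp add: hom_in_carrier\<close>)

lemma index_two_sign_hom:
  assumes \<Gamma>: "group \<Gamma>" and H: "index_two_subgroup H \<Gamma>"
    and V: "V \<in> carrier G" "V \<otimes> V = \<one>"
  shows "(\<lambda>\<sigma>. if \<sigma> \<in> H then \<one> else V) \<in> hom \<Gamma> G"
proof (rule homI)
  interpret \<Gamma>: group \<Gamma> by (fact \<Gamma>)
  have sub: "subgroup H \<Gamma>" using index_two_subgroup_is_subgroup[OF H] .
  fix \<sigma> \<tau> assume "\<sigma> \<in> carrier \<Gamma>" "\<tau> \<in> carrier \<Gamma>"
  then show "(if \<sigma> \<otimes>\<^bsub>\<Gamma>\<^esub> \<tau> \<in> H then \<one> else V) = (if \<sigma> \<in> H then \<one> else V) \<otimes> (if \<tau> \<in> H then \<one> else V)"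
    using V \<Gamma>.index_two_mult_in[OF H, of \<sigma> \<tau>] \<Gamma>.subgroup_mult_notin_left[OF sub, of \<sigma> \<tau>]
      \<Gamma>.subgroup_mult_notin_right[OF sub, of \<sigma> \<tau>] subgroup.m_closed[OF sub, of \<sigma> \<tau>]
    by (cases "\<sigma> \<in> H"; cases "\<tau> \<in> H") simp_all
qed (use V in auto)

lemma index_two_hom_outside:
  assumes \<Gamma>: "group \<Gamma>" and H: "index_two_subgroup H \<Gamma>" and c: "c \<in> carrier \<Gamma> - H"
    and S: "subgroup S G" and \<psi>: "\<psi> \<in> hom \<Gamma> G" and \<psi>_H: "\<psi> ` H \<subseteq> S" and \<psi>_c: "\<psi> c \<notin> S"
    and \<sigma>: "\<sigma> \<in> carrier \<Gamma> - H"
  shows "\<psi> \<sigma> \<notin> S"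
proof -
  interpret \<Gamma>: group \<Gamma> by (fact \<Gamma>)
  have h: "inv\<^bsub>\<Gamma>\<^esub> c \<otimes>\<^bsub>\<Gamma>\<^esub> \<sigma> \<in> H" using \<Gamma>.index_two_inv_mult_in[OF H c \<sigma>] .
  have "\<psi> \<sigma> = \<psi> c \<otimes> \<psi> (inv\<^bsub>\<Gamma>\<^esub> c \<otimes>\<^bsub>\<Gamma>\<^esub> \<sigma>)"
    using c \<sigma> \<psi> by (simp add: \<Gamma>.mult_inv_cancel_left flip: hom_mult)
  then show ?thesis
    using subgroup_mult_notin_left[OF S] c \<psi>_c \<psi>_H h \<psi> by (auto simp: hom_in_carrier)
qed

end

locale index_two_extension = \<Gamma>: group \<Gamma> + group G for \<Gamma> and G (structure) +
  fixes H c r g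
  assumes index_two: "index_two_subgroup H \<Gamma>" and c: "c \<in> carrier \<Gamma> - H"
    and r: "r \<in> hom (\<Gamma>\<lparr>carrier := H\<rparr>) G" and g: "g \<in> carrier G"
    and r_sq: "r (c \<otimes>\<^bsub>\<Gamma>\<^esub> c) = g \<otimes> g"
    and r_conj: "\<And>h. h \<in> H \<Longrightarrow> r (inv\<^bsub>\<Gamma>\<^esub> c \<otimes>\<^bsub>\<Gamma>\<^esub> h \<otimes>\<^bsub>\<Gamma>\<^esub> c) = inv g \<otimes> r h \<otimes> g"
begin

definition extension where
  "extension \<sigma> = (if \<sigma> \<in> H then r \<sigma> else g \<otimes> r (inv\<^bsub>\<Gamma>\<^esub> c \<otimes>\<^bsub>\<Gamma>\<^esub> \<sigma>))"

lemma H_subgroup: "subgroup H \<Gamma>"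
  using index_two_subgroup_is_subgroup[OF index_two] .

lemma H_carrier: "h \<in> H \<Longrightarrow> h \<in> carrier \<Gamma>"
  using subgroup.mem_carrier[OF H_subgroup] .

lemma r_carrier: "h \<in> H \<Longrightarrow> r h \<in> carrier G"
  using r by (auto simp: hom_def)

lemma r_mult: "h \<in> H \<Longrightarrow> k \<in> H \<Longrightarrow> r (h \<otimes>\<^bsub>\<Gamma>\<^esub> k) = r h \<otimes> r k"
  using r by (auto simp: hom_def)

lemma inv_c_mult_in: "\<sigma> \<in> carrier \<Gamma> - H \<Longrightarrow> inv\<^bsub>\<Gamma>\<^esub> c \<otimes>\<^bsub>\<Gamma>\<^esub> \<sigma> \<in> H"
  using \<Gamma>.index_two_inv_mult_in[OF index_two c] .

lemma extension_in: "h \<in> H \<Longrightarrow> extension h = r h"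
  unfolding extension_def by simp

lemma extension_carrier: "\<sigma> \<in> carrier \<Gamma> \<Longrightarrow> extension \<sigma> \<in> carrier G"
  using g inv_c_mult_in r_carrier unfolding extension_def by auto

lemma extension_mult_left:
  assumes h: "h \<in> H" and \<sigma>: "\<sigma> \<in> carrier \<Gamma>"
  shows "extension (h \<otimes>\<^bsub>\<Gamma>\<^esub> \<sigma>) = r h \<otimes> extension \<sigma>"
proof (cases "\<sigma> \<in> H")
  case True
  then show ?thesis using h r_mult subgroup.m_closed[OF H_subgroup] unfolding extension_def by simp
next
  case False
  have k: "inv\<^bsub>\<Gamma>\<^esub> c \<otimes>\<^bsub>\<Gamma>\<^esub> h \<otimes>\<^bsub>\<Gamma>\<^esub> c \<in> H" using \<Gamma>.index_two_conj_in[OF index_two c h] .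
  have "inv\<^bsub>\<Gamma>\<^esub> c \<otimes>\<^bsub>\<Gamma>\<^esub> (h \<otimes>\<^bsub>\<Gamma>\<^esub> \<sigma>) =
      (inv\<^bsub>\<Gamma>\<^esub> c \<otimes>\<^bsub>\<Gamma>\<^esub> h \<otimes>\<^bsub>\<Gamma>\<^esub> c) \<otimes>\<^bsub>\<Gamma>\<^esub> (inv\<^bsub>\<Gamma>\<^esub> c \<otimes>\<^bsub>\<Gamma>\<^esub> \<sigma>)"
    using c h \<sigma> H_carrier by (simp add: \<Gamma>.m_assoc \<Gamma>.mult_inv_cancel_left)
  then have "extension (h \<otimes>\<^bsub>\<Gamma>\<^esub> \<sigma>) = g \<otimes> (inv g \<otimes> r h \<otimes> g) \<otimes> r (inv\<^bsub>\<Gamma>\<^esub> c \<otimes>\<^bsub>\<Gamma>\<^esub> \<sigma>)"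
    using False h \<sigma> k inv_c_mult_in r_mult r_conj \<Gamma>.subgroup_mult_notin_right[OF H_subgroup]
    unfolding extension_def by (simp add: m_assoc g r_carrier)
  then show ?thesis
    using False h \<sigma> g inv_c_mult_in r_carrier unfolding extension_def
    by (simp add: m_assoc mult_inv_cancel_left)
qed

lemma extension_mult_c:
  assumes \<sigma>: "\<sigma> \<in> carrier \<Gamma>"
  shows "extension (c \<otimes>\<^bsub>\<Gamma>\<^esub> \<sigma>) = g \<otimes> extension \<sigma>"
proof (cases "\<sigma> \<in> H")
  case True
  then show ?thesis
    using c \<sigma> \<Gamma>.subgroup_mult_notin_left[OF H_subgroup] unfolding extension_def
    by (simp add: \<Gamma>.inv_mult_cancel_left flip: \<Gamma>.m_assoc)
next
  case False
  have "c \<otimes>\<^bsub>\<Gamma>\<^esub> \<sigma> = (c \<otimes>\<^bsub>\<Gamma>\<^esub> c) \<otimes>\<^bsub>\<Gamma>\<^esub> (inv\<^bsub>\<Gamma>\<^esub> c \<otimes>\<^bsub>\<Gamma>\<^esub> \<sigma>)"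
    using c \<sigma> by (simp add: \<Gamma>.m_assoc \<Gamma>.mult_inv_cancel_left)
  moreover have cc: "c \<otimes>\<^bsub>\<Gamma>\<^esub> c \<in> H" using \<Gamma>.index_two_mult_in[OF index_two c c] .
  moreover have "extension \<sigma> = g \<otimes> r (inv\<^bsub>\<Gamma>\<^esub> c \<otimes>\<^bsub>\<Gamma>\<^esub> \<sigma>)"
    using False unfolding extension_def by simp
  ultimately show ?thesis
    using False \<sigma> c inv_c_mult_in[of \<sigma>] extension_mult_left[OF cc, of "inv\<^bsub>\<Gamma>\<^esub> c \<otimes>\<^bsub>\<Gamma>\<^esub> \<sigma>"]
      extension_in r_sq g r_carrier
    by (simp add: m_assoc)
qed

text \<open>Every element outside \<open>H\<close> is \<open>c h\<close> with \<open>h \<in> H\<close>, so the two rules above determine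
  \<open>extension\<close> on products.\<close>
lemma extension_hom: "extension \<in> hom \<Gamma> G"
proof (rule homI)
  fix \<sigma> \<tau> assume \<sigma>: "\<sigma> \<in> carrier \<Gamma>" and \<tau>: "\<tau> \<in> carrier \<Gamma>"
  show "extension (\<sigma> \<otimes>\<^bsub>\<Gamma>\<^esub> \<tau>) = extension \<sigma> \<otimes> extension \<tau>"
  proof (cases "\<sigma> \<in> H")
    case True
    then show ?thesis using extension_mult_left[OF True \<tau>] extension_in[OF True] by simp
  next
    case False
    define h where "h = inv\<^bsub>\<Gamma>\<^esub> c \<otimes>\<^bsub>\<Gamma>\<^esub> \<sigma>"
    have h: "h \<in> H" using False \<sigma> inv_c_mult_in unfolding h_def by blast
    have \<sigma>_eq: "\<sigma> = c \<otimes>\<^bsub>\<Gamma>\<^esub> h" using \<sigma> c unfolding h_def by (simp add: \<Gamma>.mult_inv_cancel_left)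
    have "extension (\<sigma> \<otimes>\<^bsub>\<Gamma>\<^esub> \<tau>) = g \<otimes> (r h \<otimes> extension \<tau>)"
      using h \<tau> c H_carrier[OF h] by (simp add: \<sigma>_eq \<Gamma>.m_assoc extension_mult_c extension_mult_left)
    also have "\<dots> = extension \<sigma> \<otimes> extension \<tau>"
      using h \<tau> H_carrier[OF h] g r_carrier[OF h] extension_carrier[OF \<tau>]
      by (simp add: \<sigma>_eq extension_mult_c extension_in m_assoc)
    finally show ?thesis .
  qed
qed (fact extension_carrier)

lemma extension_c: "extension c = g"
proof -
  have "group_hom (\<Gamma>\<lparr>carrier := H\<rparr>) G r"
    using r \<Gamma>.subgroup_imp_group[OF H_subgroup] group_axioms
    by (simp add: group_hom_def group_hom_axioms_def)
  then have "r \<one>\<^bsub>\<Gamma>\<^esub> = \<one>" using group_hom.hom_one by fastforce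
  then show ?thesis using c g unfolding extension_def by simp
qed

end

section \<open>Matrices modulo \<open>p\<close>, \<open>PGL\<^sub>2(\<bbbF>\<^sub>p)\<close> and \<open>PSL\<^sub>2(\<bbbF>\<^sub>p)\<close>\<close>

lemma mod_add_mult_right_eq: "(i * (x mod q) + k * (y mod q)) mod q = (i * x + k * y) mod (q::int)"
  by (metis mod_add_eq mod_mult_right_eq)

lemma mod_add_mult_left_eq: "((x mod q) * i + (y mod q) * k) mod q = (x * i + y * k) mod (q::int)"
  by (metis mod_add_eq mod_mult_left_eq)

lemma mod_add_mult_eq: "((x mod q) * (y mod q) + (z mod q) * (w mod q)) mod q = (x * y + z * w) mod (q::int)"
  by (metis mod_add_eq mod_mult_eq)

lemma mod_diff_mult_eq: "((x mod q) * (y mod q) - (z mod q) * (w mod q)) mod q = (x * y - z * w) mod (q::int)"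
  by (metis mod_diff_eq mod_mult_eq)

lemma smul_smul: "smul p l (smul p m A) = smul p (l*m) A"
  by (cases A) (simp add: mod_mult_right_eq mult.assoc)

lemma mmul_assoc: "mmul p (mmul p A B) C = mmul p A (mmul p B C)"
proof -
  obtain a b c d where A: "A = (a,b,c,d)" by (cases A) auto
  obtain e f g h where B: "B = (e,f,g,h)" by (cases B) auto
  obtain i j k l where C: "C = (i,j,k,l)" by (cases C) auto
  show ?thesis unfolding A B C
    apply (simp only: mmul.simps mod_add_mult_right_eq mod_add_mult_left_eq)
    apply (simp add: algebra_simps)
    done
qed

definition mone :: m2 where "mone = (1,0,0,1)"

lemma prime_nat_int_gt_1: "prime p \<Longrightarrow> int p > 1"
  using prime_gt_1_nat by auto

lemma smul_mod: "smul p (l mod int p) A = smul p l A"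
  by (cases A) (simp add: mod_mult_left_eq)

lemma mult_mod_units:
  assumes "prime p" "\<not> int p dvd l" "\<not> int p dvd m"
  shows "(l*m) mod int p \<in> {1..<int p}"
proof -
  have pp: "prime (int p)" using assms by simp
  have "\<not> int p dvd l*m" using assms pp prime_dvd_mult_iff by blast
  hence "(l*m) mod int p \<noteq> 0" by auto
  moreover have "(l*m) mod int p \<ge> 0" "(l*m) mod int p < int p" using prime_nat_int_gt_1[OF assms(1)] by auto
  ultimately show ?thesis by auto
qed

lemma units_not_dvd: "l \<in> {1..<int p} \<Longrightarrow> \<not> int p dvd l"
  using zdvd_imp_le by fastforce

lemma exists_inverse_mod_prime:
  assumes "prime p" "\<not> int p dvd l"
  shows "\<exists>l'. (l * l') mod int p = 1 \<and> \<not> int p dvd l'"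
proof -
  have pp: "prime (int p)" using assms by simp
  have "coprime l (int p)" using prime_imp_coprime[OF pp assms(2)] by (simp add: ac_simps)
  then obtain x where x: "[l * x = 1] (mod int p)" using cong_solve_coprime_int by blast
  hence "(l * x) mod int p = 1" using prime_nat_int_gt_1[OF assms(1)] by (simp add: cong_def)
  moreover have "\<not> int p dvd x"
  proof
    assume "int p dvd x" hence "int p dvd l*x" by simp
    hence "(l*x) mod int p = 0" by simp
    with \<open>(l * x) mod int p = 1\<close> show False by simp
  qed
  ultimately show ?thesis by blast
qed

lemma pcl_smul:
  assumes "prime p" "\<not> int p dvd l"
  shows "pcl p (smul p l A) = pcl p A"
proof
  show "pcl p (smul p l A) \<subseteq> pcl p A"
  proof
    fix x assume "x \<in> pcl p (smul p l A)"
    then obtain m where m: "m \<in> {1..<int p}" "x = smul p m (smul p l A)" unfolding pcl_def by blast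
    have "x = smul p ((m*l) mod int p) A" using m by (simp add: smul_smul smul_mod)
    moreover have "(m*l) mod int p \<in> {1..<int p}"
      using mult_mod_units[OF assms(1) units_not_dvd[OF m(1)] assms(2)] .
    ultimately show "x \<in> pcl p A" unfolding pcl_def by blast
  qed
next
  show "pcl p A \<subseteq> pcl p (smul p l A)"
  proof
    fix x assume "x \<in> pcl p A"
    then obtain m where m: "m \<in> {1..<int p}" "x = smul p m A" unfolding pcl_def by blast
    obtain l' where l': "(l * l') mod int p = 1" "\<not> int p dvd l'" using exists_inverse_mod_prime[OF assms] by blast
    have "smul p ((m*l') mod int p) (smul p l A) = smul p (m*l'*l) A"
      by (metis smul_smul smul_mod mod_mult_left_eq)
    also have "\<dots> = smul p ((m*(l*l' mod int p)) mod int p) A"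
      by (metis (no_types, lifting) mod_mult_right_eq mult.assoc mult.commute smul_mod)
    also have "\<dots> = x" using l' m by (simp add: smul_mod)
    finally show "x \<in> pcl p (smul p l A)" unfolding pcl_def
      using mult_mod_units[OF assms(1) units_not_dvd[OF m(1)] l'(2)] by blast
  qed
qed

lemma smul_one_in_pcl: "prime p \<Longrightarrow> smul p 1 A \<in> pcl p A"
proof -
  assume "prime p"
  hence "(1::int) \<in> {1..<int p}" using prime_nat_int_gt_1 by simp
  thus ?thesis unfolding pcl_def by blast
qed

lemma pcl_smul_one: "prime p \<Longrightarrow> pcl p (smul p 1 A) = pcl p A"
  by (rule pcl_smul) (auto simp: prime_nat_int_gt_1 zdvd_not_zless)

lemma rep_pcl: "prime p \<Longrightarrow> \<exists>l\<in>{1..<int p}. rep (pcl p A) = smul p l A"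
proof -
  assume "prime p"
  hence "rep (pcl p A) \<in> pcl p A" unfolding rep_def using smul_one_in_pcl by (metis someI)
  thus ?thesis unfolding pcl_def by blast
qed

lemma mmul_smul: "mmul p (smul p l A) (smul p m B) = smul p (l*m) (mmul p A B)"
proof -
  obtain a b c d where A: "A = (a,b,c,d)" by (cases A) auto
  obtain e f g h where B: "B = (e,f,g,h)" by (cases B) auto
  show ?thesis unfolding A B
    apply (simp only: mmul.simps smul.simps mod_add_mult_eq mod_mult_right_eq)
    apply (simp add: algebra_simps)
    done
qed

lemma pmul_pcl: "prime p \<Longrightarrow> pmul p (pcl p A) (pcl p B) = pcl p (mmul p A B)"
proof -
  assume pr: "prime p"
  obtain l where l: "l\<in>{1..<int p}" "rep (pcl p A) = smul p l A" using rep_pcl[OF pr] by blast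
  obtain m where m: "m\<in>{1..<int p}" "rep (pcl p B) = smul p m B" using rep_pcl[OF pr] by blast
  have "\<not> int p dvd l*m"
    using pr units_not_dvd[OF l(1)] units_not_dvd[OF m(1)] prime_dvd_mult_iff[of "int p"] by auto
  thus ?thesis unfolding pmul_def l m mmul_smul using pcl_smul[OF pr] by simp
qed

lemma madj_smul: "madj p (smul p l A) = smul p l (madj p A)"
  by (cases A) (simp add: mod_minus_eq mod_mult_right_eq)

lemma pinv_pcl: "prime p \<Longrightarrow> pinv p (pcl p A) = pcl p (madj p A)"
proof -
  assume pr: "prime p"
  obtain l where l: "l\<in>{1..<int p}" "rep (pcl p A) = smul p l A" using rep_pcl[OF pr] by blast
  show ?thesis unfolding pinv_def l madj_smul using pcl_smul[OF pr units_not_dvd[OF l(1)]] by simp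
qed

lemma mtrans_smul: "mtrans (smul p l A) = smul p l (mtrans A)"
  by (cases A) simp

lemma ptrans_pcl: "prime p \<Longrightarrow> ptrans p (pcl p A) = pcl p (mtrans A)"
proof -
  assume pr: "prime p"
  obtain l where l: "l\<in>{1..<int p}" "rep (pcl p A) = smul p l A" using rep_pcl[OF pr] by blast
  show ?thesis unfolding ptrans_def l mtrans_smul using pcl_smul[OF pr units_not_dvd[OF l(1)]] by simp
qed

lemma mmul_mone_left: "mmul p mone A = smul p 1 A"
  by (cases A) (simp add: mone_def)

lemma mmul_madj_left: "mmul p (madj p A) A = smul p (mdet p A) mone"
proof -
  obtain a b c d where A: "A = (a,b,c,d)" by (cases A) auto
  show ?thesis unfolding A mone_def
    apply (simp only: mmul.simps smul.simps madj.simps mdet.simps mod_add_mult_right_eq mod_add_mult_left_eq)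
    apply (simp add: algebra_simps)
    done
qed

lemma mdet_mmul: "mdet p (mmul p A B) = (mdet p A * mdet p B) mod int p"
proof -
  obtain a b c d where A: "A = (a,b,c,d)" by (cases A) auto
  obtain e f g h where B: "B = (e,f,g,h)" by (cases B) auto
  have "((a * e + b * g) mod int p * ((c * f + d * h) mod int p) -
        (a * f + b * h) mod int p * ((c * e + d * g) mod int p)) mod int p
       = ((a * e + b * g) * (c * f + d * h) - (a * f + b * h) * (c * e + d * g)) mod int p"
    by (rule mod_diff_mult_eq)
  also have "\<dots> = ((a*d-b*c)*(e*h-f*g)) mod int p" by (simp add: algebra_simps)
  also have "\<dots> = ((a*d-b*c) mod int p * ((e*h-f*g) mod int p)) mod int p" by (metis mod_mult_eq)
  finally show ?thesis unfolding A B by simp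
qed

lemma mdet_madj: "mdet p (madj p A) = mdet p A"
proof -
  obtain a b c d where A: "A = (a,b,c,d)" by (cases A) auto
  have "(d mod int p * (a mod int p) - (- b) mod int p * ((- c) mod int p)) mod int p
      = (d * a - (-b) * (-c)) mod int p" by (rule mod_diff_mult_eq)
  thus ?thesis unfolding A by (simp add: algebra_simps)
qed

lemma mdet_smul: "mdet p (smul p l A) = (l*l*mdet p A) mod int p"
proof -
  obtain a b c d where A: "A = (a,b,c,d)" by (cases A) auto
  have "mdet p (smul p l A) = ((l*a) * (l*d) - (l*b) * (l*c)) mod int p"
    unfolding A smul.simps mdet.simps by (rule mod_diff_mult_eq)
  also have "\<dots> = (l*l*(a*d-b*c)) mod int p" by (simp add: algebra_simps)
  also have "\<dots> = (l*l*((a*d-b*c) mod int p)) mod int p" by (simp add: mod_mult_right_eq)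
  finally show ?thesis unfolding A by simp
qed

lemma mem_GL2_iff: "(a,b,c,d) \<in> GL2 p \<longleftrightarrow> a \<in> {0..<int p} \<and> b \<in> {0..<int p} \<and> c \<in> {0..<int p} \<and>
                       d \<in> {0..<int p} \<and> mdet p (a,b,c,d) \<noteq> 0"
  unfolding GL2_def by auto

lemma GL2_reduced: "A \<in> GL2 p \<Longrightarrow> smul p 1 A = A \<and> mdet p A \<noteq> 0"
  by (cases A) (auto simp: mem_GL2_iff)

lemma GL2I: "smul p 1 A = A \<Longrightarrow> mdet p A \<noteq> 0 \<Longrightarrow> p > 0 \<Longrightarrow> A \<in> GL2 p"
proof -
  assume h: "smul p 1 A = A" "mdet p A \<noteq> 0" "p > 0"
  obtain a b c d where A: "A = (a,b,c,d)" by (cases A) auto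
  have r: "x mod int p \<in> {0..<int p}" for x using h(3) by simp
  have "a = a mod int p" "b = b mod int p" "c = c mod int p" "d = d mod int p"
    using h(1) unfolding A by simp_all
  thus ?thesis using r h(2) unfolding A mem_GL2_iff by metis
qed

lemma mdet_mmul_nonzero: "prime p \<Longrightarrow> mdet p A \<noteq> 0 \<Longrightarrow> mdet p B \<noteq> 0 \<Longrightarrow> mdet p (mmul p A B) \<noteq> 0"
proof -
  assume pr: "prime p" and a: "mdet p A \<noteq> 0" and b: "mdet p B \<noteq> 0"
  have "\<not> int p dvd mdet p A" using a by (cases A) (auto simp: dvd_eq_mod_eq_0)
  moreover have "\<not> int p dvd mdet p B" using b by (cases B) (auto simp: dvd_eq_mod_eq_0)
  ultimately have "\<not> int p dvd mdet p A * mdet p B" using pr prime_dvd_mult_iff[of "int p"] by auto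
  thus ?thesis by (simp add: mdet_mmul dvd_eq_mod_eq_0)
qed

lemma smul_one_mmul: "smul p 1 (mmul p A B) = mmul p A B"
  by (cases A; cases B) simp

lemma smul_one_madj: "smul p 1 (madj p A) = madj p A"
  by (cases A) simp

lemma mmul_GL2: "prime p \<Longrightarrow> A \<in> GL2 p \<Longrightarrow> B \<in> GL2 p \<Longrightarrow> mmul p A B \<in> GL2 p"
  by (rule GL2I) (use mdet_mmul_nonzero GL2_reduced prime_gt_0_nat smul_one_mmul in blast)+

lemma madj_GL2: "prime p \<Longrightarrow> A \<in> GL2 p \<Longrightarrow> madj p A \<in> GL2 p"
  by (rule GL2I) (auto simp: smul_one_madj mdet_madj dest!: GL2_reduced intro: prime_gt_0_nat)

lemma mone_GL2: "prime p \<Longrightarrow> mone \<in> GL2 p"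
  using prime_nat_int_gt_1[of p] by (auto simp: mem_GL2_iff mone_def)

declare mmul.simps[simp del] smul.simps[simp del] madj.simps[simp del] mdet.simps[simp del] mtrans.simps[simp del]

lemma QuadRes_iff_mod: "QuadRes m x \<longleftrightarrow> (\<exists>y. y^2 mod m = x mod m)"
  unfolding QuadRes_def cong_def by simp

lemma QuadRes_mod: "QuadRes m (x mod m) \<longleftrightarrow> QuadRes m x"
  unfolding QuadRes_iff_mod by simp

lemma QuadRes_mult: "QuadRes m x \<Longrightarrow> QuadRes m y \<Longrightarrow> QuadRes m (x*y)"
proof -
  assume "QuadRes m x" "QuadRes m y"
  then obtain a b where a: "a^2 mod m = x mod m" and b: "b^2 mod m = y mod m" unfolding QuadRes_iff_mod by blast
  have "(a*b)^2 mod m = (a^2 * b^2) mod m" by (simp add: power_mult_distrib)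
  also have "\<dots> = ((a^2 mod m) * (b^2 mod m)) mod m" by (simp add: mod_mult_eq)
  also have "\<dots> = (x*y) mod m" using a b by (simp add: mod_mult_eq)
  finally show ?thesis unfolding QuadRes_iff_mod by blast
qed

lemma QuadRes_square_mult:
  assumes "prime p" "\<not> int p dvd l"
  shows "QuadRes (int p) (l*l*x) \<longleftrightarrow> QuadRes (int p) x"
proof
  assume "QuadRes (int p) x"
  moreover have "QuadRes (int p) (l*l)" unfolding QuadRes_iff_mod by (rule exI[of _ l]) (simp add: power2_eq_square)
  ultimately show "QuadRes (int p) (l*l*x)" using QuadRes_mult by blast
next
  assume h: "QuadRes (int p) (l*l*x)"
  obtain l' where l': "(l * l') mod int p = 1" "\<not> int p dvd l'" using exists_inverse_mod_prime[OF assms] by blast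
  have "QuadRes (int p) (l'*l'*(l*l*x))"
    using QuadRes_mult[OF _ h, of "l'*l'"] unfolding QuadRes_iff_mod by (metis power2_eq_square)
  moreover have "(l'*l'*(l*l*x)) mod int p = x mod int p"
  proof -
    have u: "[l*l' = 1] (mod int p)" using l' prime_nat_int_gt_1[OF assms(1)] by (simp add: cong_def)
    have "[(l*l')*(l*l')*x = 1*1*x] (mod int p)" by (intro cong_mult u cong_refl)
    hence "[l'*l'*(l*l*x) = x] (mod int p)" by (simp add: ac_simps)
    thus ?thesis by (simp add: cong_def)
  qed
  ultimately show "QuadRes (int p) x" by (metis QuadRes_mod)
qed

lemma QuadRes_mult_nonres:
  assumes "prime p" "2 < p" "\<not> int p dvd x" "\<not> int p dvd y"
    "\<not> QuadRes (int p) x" "\<not> QuadRes (int p) y"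
  shows "QuadRes (int p) (x*y)"
proof -
  let ?k = "(p - 1) div 2"
  have nx: "\<not> [x = 0] (mod int p)" using assms(3) by (simp add: cong_0_iff)
  have ny: "\<not> [y = 0] (mod int p)" using assms(4) by (simp add: cong_0_iff)
  have pp: "prime (int p)" using assms by simp
  have nxy: "\<not> [x*y = 0] (mod int p)" using assms(3,4) pp prime_dvd_mult_iff[of "int p"]
    by (simp add: cong_0_iff)
  have ex: "[-1 = x ^ ?k] (mod int p)"
    using euler_criterion[OF assms(1,2), of x] nx assms(5) by (simp add: Legendre_def)
  have ey: "[-1 = y ^ ?k] (mod int p)"
    using euler_criterion[OF assms(1,2), of y] ny assms(6) by (simp add: Legendre_def)
  have "[(-1)*(-1) = x ^ ?k * y ^ ?k] (mod int p)" using cong_mult[OF ex ey] .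
  hence e1: "[1 = (x*y) ^ ?k] (mod int p)" by (simp add: power_mult_distrib)
  have el: "[Legendre (x*y) (int p) = (x*y) ^ ?k] (mod int p)" using euler_criterion[OF assms(1,2)] .
  have "[Legendre (x*y) (int p) = 1] (mod int p)" using el e1 cong_sym cong_trans by blast
  moreover have "\<not> [-1 = (1::int)] (mod int p)"
  proof
    assume "[-1 = (1::int)] (mod int p)"
    hence "int p dvd 2" by (simp add: cong_iff_dvd_diff)
    hence "int p \<le> 2" using zdvd_imp_le by fastforce
    with assms(2) show False by simp
  qed
  ultimately show ?thesis using nxy unfolding Legendre_def by (auto split: if_splits)
qed

definition PG :: "nat \<Rightarrow> m2 set monoid" where
  "PG p = \<lparr>carrier = PGL2 p, monoid.mult = pmul p, one = pone p\<rparr>"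

lemma PG_simps [simp]: "carrier (PG p) = PGL2 p" "monoid.mult (PG p) = pmul p" "one (PG p) = pone p"
  by (simp_all add: PG_def)

lemma PGL2E: "M \<in> PGL2 p \<Longrightarrow> (\<And>A. A \<in> GL2 p \<Longrightarrow> M = pcl p A \<Longrightarrow> Q) \<Longrightarrow> Q"
  unfolding PGL2_def by blast

lemma pcl_PGL2: "A \<in> GL2 p \<Longrightarrow> pcl p A \<in> PGL2 p"
  unfolding PGL2_def by blast

lemma pone_eq_pcl: "pone p = pcl p mone" unfolding pone_def mone_def by simp

lemma mdet_mod: "mdet p A mod int p = mdet p A"
  by (cases A) (simp add: mdet.simps)

lemma GL2_mdet_not_dvd: "A \<in> GL2 p \<Longrightarrow> \<not> int p dvd mdet p A"
  by (metis GL2_reduced dvd_eq_mod_eq_0 mdet_mod)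

lemma pmul_madj_left: "prime p \<Longrightarrow> A \<in> GL2 p \<Longrightarrow> pmul p (pcl p (madj p A)) (pcl p A) = pone p"
  unfolding pmul_pcl mmul_madj_left pone_eq_pcl by (rule pcl_smul[OF _ GL2_mdet_not_dvd])

lemma group_PG: assumes pr: "prime p" shows "group (PG p)"
proof (rule groupI)
  fix x y assume "x \<in> carrier (PG p)" "y \<in> carrier (PG p)"
  then show "x \<otimes>\<^bsub>PG p\<^esub> y \<in> carrier (PG p)"
    by (auto elim!: PGL2E simp: pmul_pcl[OF pr] intro!: pcl_PGL2 mmul_GL2[OF pr])
next
  show "\<one>\<^bsub>PG p\<^esub> \<in> carrier (PG p)" using mone_GL2[OF pr] by (simp add: pone_eq_pcl pcl_PGL2)
next
  fix x y z assume "x \<in> carrier (PG p)" "y \<in> carrier (PG p)" "z \<in> carrier (PG p)"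
  then show "x \<otimes>\<^bsub>PG p\<^esub> y \<otimes>\<^bsub>PG p\<^esub> z = x \<otimes>\<^bsub>PG p\<^esub> (y \<otimes>\<^bsub>PG p\<^esub> z)"
    by (auto elim!: PGL2E simp: pmul_pcl[OF pr] mmul_assoc)
next
  fix x assume "x \<in> carrier (PG p)"
  then show "\<one>\<^bsub>PG p\<^esub> \<otimes>\<^bsub>PG p\<^esub> x = x"
    by (auto elim!: PGL2E simp: pmul_pcl[OF pr] pone_eq_pcl mmul_mone_left pcl_smul_one[OF pr])
next
  fix x assume "x \<in> carrier (PG p)"
  then obtain A where A: "A \<in> GL2 p" "x = pcl p A" by (auto elim: PGL2E)
  have "pmul p (pcl p (madj p A)) (pcl p A) = pone p" using pmul_madj_left[OF pr A(1)] .
  moreover have "pcl p (madj p A) \<in> carrier (PG p)" using madj_GL2[OF pr A(1)] by (simp add: pcl_PGL2)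
  ultimately show "\<exists>y\<in>carrier (PG p). y \<otimes>\<^bsub>PG p\<^esub> x = \<one>\<^bsub>PG p\<^esub>" using A by auto
qed

lemma inv_PG: assumes pr: "prime p" and M: "M \<in> PGL2 p" shows "inv\<^bsub>PG p\<^esub> M = pinv p M"
proof -
  interpret group "PG p" by (rule group_PG[OF pr])
  obtain A where A: "A \<in> GL2 p" "M = pcl p A" using M by (auto elim: PGL2E)
  have "pmul p (pcl p (madj p A)) (pcl p A) = pone p" using pmul_madj_left[OF pr A(1)] .
  moreover have "pcl p (madj p A) \<in> carrier (PG p)" using madj_GL2[OF pr A(1)] by (simp add: pcl_PGL2)
  ultimately show ?thesis using A inv_equality[of "pcl p (madj p A)" M] by (simp add: pinv_pcl[OF pr] pcl_PGL2)
qed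

lemma PSL2_pcl: assumes pr: "prime p" and A: "A \<in> GL2 p"
  shows "pcl p A \<in> PSL2 p \<longleftrightarrow> QuadRes (int p) (mdet p A)"
proof -
  obtain l where l: "l\<in>{1..<int p}" "rep (pcl p A) = smul p l A" using rep_pcl[OF pr] by blast
  have "QuadRes (int p) (mdet p (rep (pcl p A))) \<longleftrightarrow> QuadRes (int p) (l*l*mdet p A)"
    unfolding l mdet_smul QuadRes_mod ..
  also have "\<dots> \<longleftrightarrow> QuadRes (int p) (mdet p A)" using QuadRes_square_mult[OF pr units_not_dvd[OF l(1)]] .
  finally show ?thesis unfolding PSL2_def using pcl_PGL2[OF A] by simp
qed

lemma PSL2_subset: "PSL2 p \<subseteq> PGL2 p" unfolding PSL2_def by auto

lemma subgroup_PSL2: assumes pr: "prime p" shows "subgroup (PSL2 p) (PG p)"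
proof -
  interpret group "PG p" by (rule group_PG[OF pr])
  show ?thesis
  proof (rule subgroupI)
    show "PSL2 p \<subseteq> carrier (PG p)" using PSL2_subset by simp
    have "QuadRes (int p) (mdet p mone)" unfolding QuadRes_iff_mod mone_def by (rule exI[of _ 1]) (simp add: mdet.simps)
    hence "pone p \<in> PSL2 p" unfolding pone_eq_pcl using PSL2_pcl[OF pr mone_GL2[OF pr]] by simp
    thus "PSL2 p \<noteq> {}" by auto
  next
    fix a assume a: "a \<in> PSL2 p"
    have "a \<in> PGL2 p" using a PSL2_subset by blast
    then obtain A where A: "A \<in> GL2 p" "a = pcl p A" by (rule PGL2E)
    have "QuadRes (int p) (mdet p A)" using a A PSL2_pcl[OF pr] by simp
    hence "pcl p (madj p A) \<in> PSL2 p" using PSL2_pcl[OF pr madj_GL2[OF pr A(1)]] by (simp add: mdet_madj)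
    thus "inv\<^bsub>PG p\<^esub> a \<in> PSL2 p" using inv_PG[OF pr] A pinv_pcl[OF pr] pcl_PGL2 by simp
  next
    fix a b assume a: "a \<in> PSL2 p" and b: "b \<in> PSL2 p"
    have "a \<in> PGL2 p" "b \<in> PGL2 p" using a b PSL2_subset by blast+
    then obtain A B where A: "A \<in> GL2 p" "a = pcl p A" and B: "B \<in> GL2 p" "b = pcl p B"
      by (metis PGL2E)
    have "QuadRes (int p) (mdet p A)" "QuadRes (int p) (mdet p B)" using a b A B PSL2_pcl[OF pr] by simp_all
    hence "QuadRes (int p) (mdet p (mmul p A B))" unfolding mdet_mmul QuadRes_mod by (rule QuadRes_mult)
    thus "a \<otimes>\<^bsub>PG p\<^esub> b \<in> PSL2 p" using A B PSL2_pcl[OF pr mmul_GL2[OF pr A(1) B(1)]] by (simp add: pmul_pcl[OF pr])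
  qed
qed

lemma mult_nonPSL2:
  assumes pr: "prime p" and p2: "2 < p" and a: "a \<in> PGL2 p - PSL2 p" and b: "b \<in> PGL2 p - PSL2 p"
  shows "pmul p a b \<in> PSL2 p"
proof -
  obtain A where A: "A \<in> GL2 p" "a = pcl p A" using a by (auto elim: PGL2E)
  obtain B where B: "B \<in> GL2 p" "b = pcl p B" using b by (auto elim: PGL2E)
  have "\<not> QuadRes (int p) (mdet p A)" "\<not> QuadRes (int p) (mdet p B)" using a b A B PSL2_pcl[OF pr] by auto
  hence "QuadRes (int p) (mdet p A * mdet p B)"
    using QuadRes_mult_nonres[OF pr p2 GL2_mdet_not_dvd[OF A(1)] GL2_mdet_not_dvd[OF B(1)]] by blast
  hence "QuadRes (int p) (mdet p (mmul p A B))" unfolding mdet_mmul QuadRes_mod .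
  thus ?thesis using A B PSL2_pcl[OF pr mmul_GL2[OF pr A(1) B(1)]] by (simp add: pmul_pcl[OF pr])
qed

definition J0 :: "nat \<Rightarrow> m2" where "J0 p = (0, 1, int p - 1, 0)"
definition Jm :: "nat \<Rightarrow> m2 set" where "Jm p = pcl p (J0 p)"

lemma J0_GL2: "prime p \<Longrightarrow> J0 p \<in> GL2 p"
  using prime_nat_int_gt_1[of p] by (auto simp: J0_def mem_GL2_iff mdet.simps)

lemma J0_det: "prime p \<Longrightarrow> mdet p (J0 p) = 1"
  using prime_nat_int_gt_1[of p] by (simp add: J0_def mdet.simps)

lemma Jm_PSL2: "prime p \<Longrightarrow> Jm p \<in> PSL2 p"
proof -
  assume pr: "prime p"
  have "QuadRes (int p) 1" unfolding QuadRes_iff_mod by (rule exI[of _ 1]) simp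
  thus ?thesis unfolding Jm_def using PSL2_pcl[OF pr J0_GL2[OF pr]] J0_det[OF pr] by simp
qed

lemma J_conj_madj_eq_mtrans:
  assumes pr: "prime p" and A: "A \<in> GL2 p"
  shows "mmul p (mmul p (J0 p) A) (madj p (J0 p)) = mtrans (madj p A)"
proof -
  obtain a b c d where Ad: "A = (a,b,c,d)" by (cases A) auto
  show ?thesis unfolding Ad J0_def
    apply (simp only: mmul.simps madj.simps mtrans.simps mod_add_mult_eq prod.inject)
    apply (intro conjI; simp only: mod_eq_dvd_iff; simp add: algebra_simps)
    done
qed

lemma ptrans_pinv:
  assumes pr: "prime p" and M: "M \<in> PGL2 p"
  shows "ptrans p (pinv p M) = pmul p (pmul p (Jm p) M) (pinv p (Jm p))"
proof -
  obtain A where A: "A \<in> GL2 p" "M = pcl p A" using M by (rule PGL2E)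
  show ?thesis unfolding A Jm_def pinv_pcl[OF pr] ptrans_pcl[OF pr] pmul_pcl[OF pr]
    J_conj_madj_eq_mtrans[OF pr A(1)] ..
qed

definition V0 :: "nat \<Rightarrow> int \<Rightarrow> m2" where "V0 p v = (0, v mod int p, (-1) mod int p, 0)"

lemma Vmat_eq_pcl: "Vmat p v = pcl p (V0 p v)" unfolding Vmat_def V0_def ..

lemma V0_det: assumes "prime p" "v \<in> {1..<int p}" shows "mdet p (V0 p v) = v"
proof -
  have P: "int p > 1" using prime_nat_int_gt_1[OF assms(1)] .
  have "(-(v*(int p - 1))) mod int p = v mod int p" by (simp only: mod_eq_dvd_iff) (simp add: algebra_simps)
  thus ?thesis using assms(2) P by (simp add: V0_def mdet.simps zmod_minus1)
qed

lemma V0_GL2: assumes "prime p" "v \<in> {1..<int p}" shows "V0 p v \<in> GL2 p"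
proof -
  have P: "int p > 1" using prime_nat_int_gt_1[OF assms(1)] .
  have "mdet p (V0 p v) = v" using V0_det assms by blast
  thus ?thesis using assms(2) P by (auto simp: V0_def mem_GL2_iff zmod_minus1)
qed

lemma Vmat_nonPSL2:
  assumes "prime p" "v \<in> {1..<int p}" "\<not> QuadRes (int p) v"
  shows "Vmat p v \<in> PGL2 p - PSL2 p"
proof -
  have P: "int p > 1" using prime_nat_int_gt_1[OF assms(1)] .
  have "mdet p (V0 p v) = v" using V0_det assms by blast
  thus ?thesis unfolding Vmat_eq_pcl using PSL2_pcl[OF assms(1) V0_GL2[OF assms(1,2)]] assms(3)
      pcl_PGL2[OF V0_GL2[OF assms(1,2)]] by simp
qed

lemma Vmat_sq:
  assumes pr: "prime p" and v: "v \<in> {1..<int p}"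
  shows "pmul p (Vmat p v) (Vmat p v) = pone p"
proof -
  have P: "int p > 1" using prime_nat_int_gt_1[OF pr] .
  have "mmul p (V0 p v) (V0 p v) = smul p (v * (int p - 1)) mone"
    using v P by (simp add: V0_def mone_def mmul.simps smul.simps zmod_minus1 ac_simps)
  moreover have "\<not> int p dvd v * (int p - 1)"
  proof -
    have "\<not> int p dvd (int p - 1)" using units_not_dvd[of "int p - 1" p] P by simp
    thus ?thesis using units_not_dvd[OF v] pr prime_dvd_mult_iff[of "int p"] by simp
  qed
  ultimately show ?thesis unfolding Vmat_eq_pcl pmul_pcl[OF pr] pone_eq_pcl using pcl_smul[OF pr] by simp
qed

declare PG_simps [simp del]

lemma PG_mult_eq: "pmul p x y = x \<otimes>\<^bsub>PG p\<^esub> y" and PG_one_eq: "pone p = \<one>\<^bsub>PG p\<^esub>"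
  and PG_carrier_eq: "PGL2 p = carrier (PG p)"
  by (simp_all add: PG_simps)

lemma PG_inv_eq: "prime p \<Longrightarrow> x \<in> PGL2 p \<Longrightarrow> pinv p x = inv\<^bsub>PG p\<^esub> x"
  by (simp add: inv_PG)

lemma index_two_PSL2:
  assumes "prime p" "2 < p" "v \<in> {1..<int p}" "\<not> QuadRes (int p) v"
  shows "index_two_subgroup (PSL2 p) (PG p)"
  unfolding index_two_subgroup_def
  using subgroup_PSL2[OF assms(1)] mult_nonPSL2[OF assms(1,2)] Vmat_nonPSL2[OF assms(1,3,4)]
  by (auto simp: PG_simps)

section \<open>The absolute Galois group\<close>

lemma GQ_add: "\<sigma> \<in> GQ \<Longrightarrow> \<sigma> (x + y) = \<sigma> x + \<sigma> y" unfolding GQ_def by auto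
lemma GQ_mult: "\<sigma> \<in> GQ \<Longrightarrow> \<sigma> (x * y) = \<sigma> x * \<sigma> y" unfolding GQ_def by auto
lemma GQ_one: "\<sigma> \<in> GQ \<Longrightarrow> \<sigma> 1 = 1" unfolding GQ_def by auto
lemma GQ_bij: "\<sigma> \<in> GQ \<Longrightarrow> bij \<sigma>" unfolding GQ_def by auto

lemma GQ_zero: "\<sigma> \<in> GQ \<Longrightarrow> \<sigma> 0 = 0"
  using GQ_add[of \<sigma> 0 0] by simp

lemma GQ_uminus: "\<sigma> \<in> GQ \<Longrightarrow> \<sigma> (- x) = - \<sigma> x"
  using GQ_add[of \<sigma> x "-x"] GQ_zero[of \<sigma>] by (simp add: add_eq_0_iff)

lemma GQ_of_nat: "\<sigma> \<in> GQ \<Longrightarrow> \<sigma> (of_nat n) = of_nat n"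
  by (induction n) (simp_all add: GQ_zero GQ_one GQ_add)

lemma GQ_of_int: "\<sigma> \<in> GQ \<Longrightarrow> \<sigma> (of_int n) = of_int n"
proof (cases "n \<ge> 0")
  case True
  assume s: "\<sigma> \<in> GQ"
  have "n = int (nat n)" using True by simp
  then show ?thesis using GQ_of_nat[OF s, of "nat n"] by (metis of_int_of_nat_eq)
next
  case False
  assume s: "\<sigma> \<in> GQ"
  have "n = - int (nat (-n))" using False by simp
  then show ?thesis using GQ_of_nat[OF s, of "nat (-n)"] GQ_uminus[OF s] by (metis of_int_minus of_int_of_nat_eq)
qed

lemma GQ_inverse: "\<sigma> \<in> GQ \<Longrightarrow> \<sigma> (inverse x) = inverse (\<sigma> x)"
proof (cases "x = 0")
  case True
  assume "\<sigma> \<in> GQ" thus ?thesis using True by (simp add: GQ_zero)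
next
  case False
  assume s: "\<sigma> \<in> GQ"
  have "\<sigma> x * \<sigma> (inverse x) = 1" using GQ_mult[OF s, of x "inverse x"] GQ_one[OF s] False by simp
  thus ?thesis by (metis inverse_unique)
qed

lemma GQ_divide: "\<sigma> \<in> GQ \<Longrightarrow> \<sigma> (x / y) = \<sigma> x / \<sigma> y"
  by (simp add: divide_inverse GQ_mult GQ_inverse)

lemma GQ_of_rat: "\<sigma> \<in> GQ \<Longrightarrow> \<sigma> (of_rat q) = of_rat q"
proof (cases q)
  case (Fract a b)
  assume s: "\<sigma> \<in> GQ"
  show ?thesis using Fract by (simp add: of_rat_rat GQ_divide[OF s] GQ_of_int[OF s])
qed

lemma GQ_sum: "\<sigma> \<in> GQ \<Longrightarrow> \<sigma> (sum f S) = (\<Sum>s\<in>S. \<sigma> (f s))"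
  by (induction S rule: infinite_finite_induct) (simp_all add: GQ_zero GQ_add)

lemma GQ_id: "id \<in> GQ" unfolding GQ_def by auto

lemma GQ_comp: "\<sigma> \<in> GQ \<Longrightarrow> \<tau> \<in> GQ \<Longrightarrow> \<sigma> \<circ> \<tau> \<in> GQ"
  unfolding GQ_def by (auto intro: bij_comp)

lemma GQ_inv_left: "\<sigma> \<in> GQ \<Longrightarrow> inv_into UNIV \<sigma> (\<sigma> x) = x"
  using GQ_bij bij_is_inj inv_into_f_f by fastforce

lemma GQ_inv_right: "\<sigma> \<in> GQ \<Longrightarrow> \<sigma> (inv_into UNIV \<sigma> x) = x"
  using GQ_bij bij_is_surj f_inv_into_f by (metis UNIV_I surj_f_inv_f)

lemma GQ_inv: "\<sigma> \<in> GQ \<Longrightarrow> inv_into UNIV \<sigma> \<in> GQ"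
proof -
  assume s: "\<sigma> \<in> GQ"
  let ?i = "inv_into UNIV \<sigma>"
  have inj: "inj \<sigma>" using GQ_bij[OF s] bij_is_inj by blast
  have "bij ?i" using GQ_bij[OF s] by (simp add: bij_imp_bij_inv)
  moreover have "?i 1 = 1" using GQ_inv_left[OF s, of 1] GQ_one[OF s] by simp
  moreover have "?i (x + y) = ?i x + ?i y" for x y
  proof -
    have "\<sigma> (?i x + ?i y) = x + y" by (simp add: GQ_add[OF s] GQ_inv_right[OF s])
    thus ?thesis using GQ_inv_left[OF s] by metis
  qed
  moreover have "?i (x * y) = ?i x * ?i y" for x y
  proof -
    have "\<sigma> (?i x * ?i y) = x * y" by (simp add: GQ_mult[OF s] GQ_inv_right[OF s])
    thus ?thesis using GQ_inv_left[OF s] by metis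
  qed
  ultimately show ?thesis unfolding GQ_def by blast
qed

lemma GQ_inv_comp: "\<sigma> \<in> GQ \<Longrightarrow> inv_into UNIV \<sigma> \<circ> \<sigma> = id"
  by (rule ext) (simp add: GQ_inv_left)

lemma Gal_sub: "Gal K \<subseteq> GQ" unfolding Gal_def by auto

lemma Gal_comp: "\<sigma> \<in> Gal K \<Longrightarrow> \<tau> \<in> Gal K \<Longrightarrow> \<sigma> \<circ> \<tau> \<in> Gal K"
  unfolding Gal_def by (auto intro: GQ_comp)

lemma Gal_inv: assumes "\<sigma> \<in> Gal K" shows "inv_into UNIV \<sigma> \<in> Gal K"
proof -
  have s: "\<sigma> \<in> GQ" and f: "\<forall>x\<in>K. \<sigma> x = x" using assms unfolding Gal_def by auto
  have "inv_into UNIV \<sigma> x = x" if "x \<in> K" for x using GQ_inv_left[OF s, of x] f that by simp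
  thus ?thesis using GQ_inv[OF s] unfolding Gal_def by blast
qed

lemma Gal_id: "id \<in> Gal K" unfolding Gal_def using GQ_id by auto

lemma Gal_mono: "K \<subseteq> L \<Longrightarrow> Gal L \<subseteq> Gal K" unfolding Gal_def by auto

lemma GQ_fixes_span:
  assumes "\<sigma> \<in> GQ" "\<forall>s\<in>S. \<sigma> s = s"
  shows "\<sigma> (\<Sum>s\<in>S. of_rat (c s) * s) = (\<Sum>s\<in>S. of_rat (c s) * s)"
  using assms by (simp add: GQ_sum GQ_mult GQ_of_rat)

lemma number_field_fixer:
  assumes "number_field F"
  obtains S where "finite S" "\<And>\<sigma>. \<sigma> \<in> GQ \<Longrightarrow> \<forall>s\<in>S. \<sigma> s = s \<Longrightarrow> \<sigma> \<in> Gal F"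
proof -
  obtain S where S: "finite S" "F \<subseteq> {\<Sum>s\<in>S. of_rat (c s) * s | c. True}"
    using assms unfolding number_field_def by blast
  have "\<sigma> \<in> Gal F" if "\<sigma> \<in> GQ" "\<forall>s\<in>S. \<sigma> s = s" for \<sigma>
    unfolding Gal_def using that S(2) GQ_fixes_span[OF that] by blast
  thus ?thesis using that S(1) by blast
qed

definition GQ_group :: "(qbar \<Rightarrow> qbar) monoid" where
  "GQ_group = \<lparr>carrier = GQ, monoid.mult = (\<circ>), one = id\<rparr>"

lemma GQ_group_simps [simp]: "carrier GQ_group = GQ" "monoid.mult GQ_group = (\<circ>)" "one GQ_group = id"
  by (simp_all add: GQ_group_def)

lemma group_GQ_group: "group GQ_group"
proof (rule groupI)
  show "\<exists>\<tau>\<in>carrier GQ_group. \<tau> \<otimes>\<^bsub>GQ_group\<^esub> \<sigma> = \<one>\<^bsub>GQ_group\<^esub>" if "\<sigma> \<in> carrier GQ_group" for \<sigma>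
    using that GQ_inv GQ_inv_comp by auto
qed (auto simp: GQ_comp GQ_id comp_assoc)

lemma inv_GQ_group: "\<sigma> \<in> GQ \<Longrightarrow> inv\<^bsub>GQ_group\<^esub> \<sigma> = inv_into UNIV \<sigma>"
  using group.inv_equality[OF group_GQ_group] GQ_inv GQ_inv_comp by simp

lemma subgroup_Gal: "subgroup (Gal K) GQ_group"
proof (rule group.subgroupI[OF group_GQ_group])
  show "inv\<^bsub>GQ_group\<^esub> \<sigma> \<in> Gal K" if "\<sigma> \<in> Gal K" for \<sigma>
  proof -
    have "\<sigma> \<in> GQ" using that Gal_sub by blast
    then show ?thesis using that by (simp add: inv_GQ_group Gal_inv)
  qed
qed (use Gal_sub Gal_comp Gal_id[of K] in auto)

lemma krull_continuous_combine:
  assumes "krull_continuous K f" "krull_continuous K g"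
  shows "krull_continuous K (\<lambda>\<sigma>. h (f \<sigma>) (g \<sigma>))"
  unfolding krull_continuous_def
proof
  fix \<sigma> assume "\<sigma> \<in> K"
  obtain S where "finite S" "\<forall>\<tau>\<in>K. (\<forall>x\<in>S. \<tau> x = \<sigma> x) \<longrightarrow> f \<tau> = f \<sigma>"
    using assms(1) \<open>\<sigma> \<in> K\<close> unfolding krull_continuous_def by blast
  moreover obtain T where "finite T" "\<forall>\<tau>\<in>K. (\<forall>x\<in>T. \<tau> x = \<sigma> x) \<longrightarrow> g \<tau> = g \<sigma>"
    using assms(2) \<open>\<sigma> \<in> K\<close> unfolding krull_continuous_def by blast
  ultimately show "\<exists>S. finite S \<and> (\<forall>\<tau>\<in>K. (\<forall>x\<in>S. \<tau> x = \<sigma> x) \<longrightarrow> h (f \<tau>) (g \<tau>) = h (f \<sigma>) (g \<sigma>))"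
    by (intro exI[of _ "S \<union> T"]) auto
qed

lemma krull_continuous_Gal_indicator:
  assumes "finite T" "T \<subseteq> K" "\<And>\<sigma>. \<sigma> \<in> GQ \<Longrightarrow> \<forall>t\<in>T. \<sigma> t = t \<Longrightarrow> \<sigma> \<in> Gal K"
  shows "krull_continuous GQ (\<lambda>\<sigma>. f (\<sigma> \<in> Gal K))"
  unfolding krull_continuous_def
proof
  have Gal_iff: "\<tau> \<in> Gal K \<longleftrightarrow> (\<forall>t\<in>T. \<tau> t = t)" if "\<tau> \<in> GQ" for \<tau>
    using that assms(2,3) unfolding Gal_def by blast
  fix \<sigma> assume "\<sigma> \<in> GQ"
  then have "\<forall>\<tau>\<in>GQ. (\<forall>x\<in>T. \<tau> x = \<sigma> x) \<longrightarrow> \<tau> \<in> Gal K \<longleftrightarrow> \<sigma> \<in> Gal K"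
    using Gal_iff by simp
  then show "\<exists>S. finite S \<and> (\<forall>\<tau>\<in>GQ. (\<forall>x\<in>S. \<tau> x = \<sigma> x) \<longrightarrow> f (\<tau> \<in> Gal K) = f (\<sigma> \<in> Gal K))"
    using assms(1) by auto
qed

lemma krull_continuous_hom:
  assumes G: "group G" and \<psi>: "\<psi> \<in> hom GQ_group G" and T: "finite T"
    and ker: "\<And>\<tau>. \<tau> \<in> GQ \<Longrightarrow> \<forall>t\<in>T. \<tau> t = t \<Longrightarrow> \<psi> \<tau> = \<one>\<^bsub>G\<^esub>"
  shows "krull_continuous GQ \<psi>"
  unfolding krull_continuous_def
proof
  interpret group_hom GQ_group G \<psi>
    using G \<psi> group_GQ_group by (simp add: group_hom_def group_hom_axioms_def)
  fix \<sigma> assume \<sigma>: "\<sigma> \<in> GQ"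
  have "\<psi> \<tau> = \<psi> \<sigma>" if \<tau>: "\<tau> \<in> GQ" and agree: "\<forall>x\<in>T. \<tau> x = \<sigma> x" for \<tau>
  proof -
    define \<mu> where "\<mu> = inv_into UNIV \<sigma> \<circ> \<tau>"
    have \<mu>: "\<mu> \<in> GQ" "\<forall>t\<in>T. \<mu> t = t"
      using \<sigma> \<tau> agree GQ_comp GQ_inv GQ_inv_left unfolding \<mu>_def by auto
    have "\<tau> = \<sigma> \<circ> \<mu>" unfolding \<mu>_def by (rule ext) (simp add: GQ_inv_right[OF \<sigma>])
    then show "\<psi> \<tau> = \<psi> \<sigma>" using \<sigma> \<mu> ker[OF \<mu>] hom_mult[of \<sigma> \<mu>] by simp
  qed
  then show "\<exists>S. finite S \<and> (\<forall>\<tau>\<in>GQ. (\<forall>x\<in>S. \<tau> x = \<sigma> x) \<longrightarrow> \<psi> \<tau> = \<psi> \<sigma>)"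
    using T by blast
qed

section \<open>The cyclotomic field \<open>\<rat>(\<zeta>\<^sub>p)\<close>\<close>

definition Phi :: "nat \<Rightarrow> 'a::comm_ring_1 poly" where "Phi p = (\<Sum>k<p. monom 1 k)"

lemma coeff_Phi: "coeff (Phi p) i = (if i < p then 1 else 0)"
  unfolding Phi_def by (simp add: coeff_sum coeff_monom)

lemma poly_Phi: "poly (Phi p) x = (\<Sum>k<p. x^k)"
  unfolding Phi_def by (simp add: poly_sum poly_monom)

lemma degree_Phi: "p > 0 \<Longrightarrow> degree (Phi p :: 'a::{comm_ring_1,zero_neq_one} poly) = p - 1"
proof (rule antisym)
  assume "p > 0"
  show "degree (Phi p :: 'a poly) \<le> p - 1" by (rule degree_le) (auto simp: coeff_Phi)
  show "p - 1 \<le> degree (Phi p :: 'a poly)" by (rule le_degree) (use \<open>p > 0\<close> in \<open>simp add: coeff_Phi\<close>)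
qed

lemma zeta_spec: assumes "prime p" shows "zeta p ^ p = 1" "zeta p \<noteq> 1"
proof -
  have p1: "p > 1" using prime_gt_1_nat[OF assms] .
  have "degree (Phi p :: qbar poly) = p - 1" using p1 by (intro degree_Phi) simp
  hence "degree (Phi p :: qbar poly) > 0" using p1 by simp
  then obtain z :: qbar where z: "poly (Phi p) z = 0" using alg_closed_imp_poly_has_root by blast
  hence s: "(\<Sum>k<p. z^k) = 0" by (simp add: poly_Phi)
  have "z \<noteq> 1" using s p1 by auto
  moreover have "z ^ p = 1" using one_diff_power_eq[of z p] s by simp
  ultimately have ex: "\<exists>z::qbar. z ^ p = 1 \<and> z \<noteq> 1" by blast
  show "zeta p ^ p = 1" "zeta p \<noteq> 1" unfolding zeta_def using someI_ex[OF ex] by auto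
qed

lemma zeta_pow_eq_1: assumes "prime p" shows "zeta p ^ k = 1 \<longleftrightarrow> p dvd k"
proof
  assume "p dvd k" then obtain m where "k = p * m" by blast
  thus "zeta p ^ k = 1" using zeta_spec[OF assms] by (simp add: power_mult)
next
  assume h: "zeta p ^ k = 1"
  show "p dvd k"
  proof (rule ccontr)
    assume nd: "\<not> p dvd k"
    hence k0: "k \<noteq> 0" by (metis dvd_0_right)
    have "coprime p k" using prime_imp_coprime[OF assms nd] .
    hence g: "gcd k p = 1" by (metis coprime_iff_gcd_eq_1 coprime_commute)
    obtain x y where xy: "k * x = p * y + gcd k p" using bezout_nat[OF k0] by blast
    have "zeta p ^ (k * x) = 1" using h by (simp add: power_mult)
    moreover have "zeta p ^ (p * y + 1) = zeta p" using zeta_spec[OF assms] by (simp add: power_add power_mult)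
    ultimately show False using xy g zeta_spec(2)[OF assms] by simp
  qed
qed

lemma zeta_pow_mod: "prime p \<Longrightarrow> zeta p ^ k = zeta p ^ (k mod p)"
proof -
  assume pr: "prime p"
  have "zeta p ^ k = zeta p ^ (p * (k div p) + k mod p)" by simp
  also have "\<dots> = zeta p ^ (k mod p)" by (simp only: power_add power_mult zeta_spec(1)[OF pr] power_one mult.left_neutral)
  finally show ?thesis .
qed

lemma sum_zeta_pow_eq_0:
  assumes "prime p" "\<not> p dvd i"
  shows "(\<Sum>k<p. (zeta p ^ i) ^ k) = 0"
proof -
  let ?w = "zeta p ^ i"
  have "?w \<noteq> 1" using zeta_pow_eq_1[OF assms(1)] assms(2) by simp
  moreover have "?w ^ p = 1" using zeta_spec[OF assms(1)] by (metis power_mult power_mult_distrib mult.commute power_one)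
  ultimately show ?thesis using one_diff_power_eq[of ?w p] by simp
qed

lemma sum_zeta_pow_units:
  assumes "prime p" "\<not> p dvd i"
  shows "(\<Sum>k\<in>{1..<p}. (zeta p ^ i) ^ k) = -1"
proof -
  have "(\<Sum>k<p. (zeta p ^ i) ^ k) = (\<Sum>k\<in>insert 0 {1..<p}. (zeta p ^ i) ^ k)"
    using prime_gt_1_nat[OF assms(1)] by (intro sum.cong) auto
  also have "\<dots> = 1 + (\<Sum>k\<in>{1..<p}. (zeta p ^ i) ^ k)" by (subst sum.insert) auto
  finally show ?thesis using sum_zeta_pow_eq_0[OF assms] by (simp add: add_eq_0_iff)
qed

lemma sum_zeta_pow_dvd:
  assumes "prime p" "p dvd i"
  shows "(\<Sum>k\<in>{1..<p}. (zeta p ^ i) ^ k) = of_nat (p - 1)"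
proof -
  have "zeta p ^ i = 1" using zeta_pow_eq_1[OF assms(1)] assms(2) by simp
  thus ?thesis by simp
qed

lemma map_poly_of_int_diff: "map_poly (of_int :: int \<Rightarrow> 'a::comm_ring_1) (f - g) = map_poly of_int f - map_poly of_int g"
  by (intro poly_eqI) (simp add: coeff_map_poly)

lemma map_poly_of_int_mult: "map_poly (of_int :: int \<Rightarrow> 'a::comm_ring_1) (f * g) = map_poly of_int f * map_poly of_int g"
  by (intro poly_eqI) (simp add: coeff_map_poly coeff_mult of_int_sum)

lemma map_poly_of_int_smult: "map_poly (of_int :: int \<Rightarrow> 'a::comm_ring_1) (smult c f) = smult (of_int c) (map_poly of_int f)"
  by (rule map_poly_smult) simp_all

lemma map_poly_of_rat_add: "map_poly (of_rat :: rat \<Rightarrow> 'a::field_char_0) (f + g) = map_poly of_rat f + map_poly of_rat g"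
  by (intro poly_eqI) (simp add: coeff_map_poly of_rat_add)

lemma map_poly_of_rat_diff: "map_poly (of_rat :: rat \<Rightarrow> 'a::field_char_0) (f - g) = map_poly of_rat f - map_poly of_rat g"
  by (intro poly_eqI) (simp add: coeff_map_poly of_rat_diff)

lemma map_poly_of_rat_mult: "map_poly (of_rat :: rat \<Rightarrow> 'a::field_char_0) (f * g) = map_poly of_rat f * map_poly of_rat g"
  by (intro poly_eqI) (simp add: coeff_map_poly coeff_mult of_rat_sum of_rat_mult)

lemma map_poly_of_rat_smult: "map_poly (of_rat :: rat \<Rightarrow> 'a::field_char_0) (smult c f) = smult (of_rat c) (map_poly of_rat f)"
  by (rule map_poly_smult) (simp_all add: of_rat_mult)

lemma map_poly_of_rat_of_int: "map_poly (of_rat :: rat \<Rightarrow> 'a::field_char_0) (map_poly of_int f) = map_poly of_int f"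
  by (intro poly_eqI) (simp add: coeff_map_poly)

definition Psi :: "nat \<Rightarrow> int poly" where "Psi p = pcompose (Phi p) [:1,1:]"

lemma Psi_eq: "pCons 0 (Psi p) = [:1,1:] ^ p - 1"
proof (rule poly_ext)
  fix x :: int
  have "poly (pCons 0 (Psi p)) x = x * (\<Sum>k<p. (x+1)^k)"
    by (simp add: Psi_def poly_pcompose poly_Phi algebra_simps)
  also have "\<dots> = (x+1)^p - 1" using one_diff_power_eq[of "x+1" p] by (simp add: algebra_simps)
  finally show "poly (pCons 0 (Psi p)) x = poly ([:1,1:] ^ p - 1) x" by (simp add: algebra_simps)
qed

lemma coeff_Psi: "k < p \<Longrightarrow> coeff (Psi p) k = int (p choose Suc k)"
proof -
  assume k: "k < p"
  have "coeff (Psi p) k = coeff (pCons 0 (Psi p)) (Suc k)" by simp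
  also have "\<dots> = coeff ([:1,1:] ^ p) (Suc k)" unfolding Psi_eq by simp
  also have "\<dots> = int (p choose Suc k)" using k by (simp add: coeff_linear_poly_power)
  finally show ?thesis .
qed

lemma degree_Psi: "p > 0 \<Longrightarrow> degree (Psi p) = p - 1"
  unfolding Psi_def by (simp add: degree_pcompose degree_Phi)

lemma eisenstein_no_factor:
  fixes f g :: "int poly" and q :: int
  assumes q: "prime q" and fg: "f * g = P" and df: "degree f \<ge> 1" and dg: "degree g \<ge> 1"
    and mid: "\<forall>k<degree P. q dvd coeff P k" and c0: "\<not> q^2 dvd coeff P 0"
    and lc: "\<not> q dvd lead_coeff P" and f0: "q dvd coeff f 0"
  shows False
proof -
  have f0': "f \<noteq> 0" "g \<noteq> 0" using df dg by auto
  have degP: "degree P = degree f + degree g" using degree_mult_eq[OF f0'] fg by simp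
  have "lead_coeff P = lead_coeff f * lead_coeff g" using lead_coeff_mult[of f g] fg by simp
  hence nlf: "\<not> q dvd coeff f (degree f)" using lc by auto
  define m where "m = (LEAST i. \<not> q dvd coeff f i)"
  have m1: "\<not> q dvd coeff f m" unfolding m_def by (rule LeastI) (rule nlf)
  have m2: "m \<le> degree f" unfolding m_def by (rule Least_le) (rule nlf)
  have m3: "\<And>i. i < m \<Longrightarrow> q dvd coeff f i" unfolding m_def using not_less_Least by blast
  have "m < degree P" using m2 degP dg by simp
  hence "q dvd coeff P m" using mid by blast
  also have "coeff P m = (\<Sum>i<m. coeff f i * coeff g (m - i)) + coeff f m * coeff g 0"
    unfolding fg[symmetric] coeff_mult by (simp add: lessThan_Suc_atMost[symmetric])
  finally have "q dvd (\<Sum>i<m. coeff f i * coeff g (m - i)) + coeff f m * coeff g 0" .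
  moreover have "q dvd (\<Sum>i<m. coeff f i * coeff g (m - i))" by (intro dvd_sum) (simp add: m3)
  ultimately have "q dvd coeff f m * coeff g 0" using dvd_add_right_iff by blast
  hence "q dvd coeff g 0" using m1 q prime_dvd_mult_iff by blast
  hence "q * q dvd coeff f 0 * coeff g 0" using f0 by (simp add: mult_dvd_mono)
  moreover have "coeff P 0 = coeff f 0 * coeff g 0" unfolding fg[symmetric] by (simp add: coeff_mult)
  ultimately show False using c0 by (simp add: power2_eq_square)
qed

lemma Psi_coeffs:
  assumes pr: "prime p"
  shows "\<forall>k<degree (Psi p). int p dvd coeff (Psi p) k" "\<not> (int p)^2 dvd coeff (Psi p) 0"
    "\<not> int p dvd lead_coeff (Psi p)" "coeff (Psi p) 0 = int p" "lead_coeff (Psi p) = 1"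
proof -
  have p1: "p > 1" using prime_gt_1_nat[OF pr] .
  have dP: "degree (Psi p) = p - 1" using p1 by (simp add: degree_Psi)
  show "\<forall>k<degree (Psi p). int p dvd coeff (Psi p) k"
  proof (intro allI impI)
    fix k assume "k < degree (Psi p)"
    hence k: "Suc k < p" using dP by simp
    have "p dvd (p choose Suc k)" by (rule dvd_choose_prime) (use k pr in auto)
    thus "int p dvd coeff (Psi p) k" using k by (simp add: coeff_Psi)
  qed
  show c0: "coeff (Psi p) 0 = int p" using p1 by (simp add: coeff_Psi)
  show lc: "lead_coeff (Psi p) = 1" using p1 dP by (simp add: coeff_Psi)
  show "\<not> (int p)^2 dvd coeff (Psi p) 0"
  proof
    assume "(int p)^2 dvd coeff (Psi p) 0"
    hence "int p * int p dvd int p" using c0 by (simp add: power2_eq_square)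
    hence "int p * int p \<le> int p" using p1 by (intro zdvd_imp_le) auto
    thus False using p1 by (simp add: mult_le_cancel_right1)
  qed
  show "\<not> int p dvd lead_coeff (Psi p)" using lc p1 by simp
qed

lemma unit_factor_of_monic:
  fixes a b :: "int poly"
  assumes "lead_coeff (a * b) = 1" "degree a = 0"
  shows "is_unit a"
proof -
  obtain c where c: "a = [:c:]" using assms(2) by (metis degree_eq_zeroE)
  have "1 = c * lead_coeff b" using assms(1) c lead_coeff_mult[of a b] by simp
  then show ?thesis using c by (metis dvd_triv_left is_unit_const_poly_iff)
qed

lemma irreducible_Psi: assumes pr: "prime p" shows "irreducible (Psi p)"
proof (rule irreducibleI)
  have p1: "p > 1" using prime_gt_1_nat[OF pr] .
  note PC = Psi_coeffs[OF pr]
  show "Psi p \<noteq> 0" using PC(5) by auto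
  show "\<not> is_unit (Psi p)"
  proof
    assume "is_unit (Psi p)"
    hence "degree (Psi p) = 0" by (auto simp: is_unit_poly_iff)
    thus False using p1 degree_Psi[of p] by simp
  qed
  fix a b assume ab: "Psi p = a * b"
  show "is_unit a \<or> is_unit b"
  proof (cases "degree a = 0 \<or> degree b = 0")
    case True
    then show ?thesis
      using unit_factor_of_monic[of a b] unit_factor_of_monic[of b a] PC(5) ab
      by (auto simp: mult.commute)
  next
    case False
    hence d: "degree a \<ge> 1" "degree b \<ge> 1" by auto
    have "coeff a 0 * coeff b 0 = int p" using PC(4) ab by (simp add: coeff_mult)
    hence "int p dvd coeff a 0 * coeff b 0" by simp
    hence "int p dvd coeff a 0 \<or> int p dvd coeff b 0" using pr prime_dvd_mult_iff[of "int p"] by simp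
    thus ?thesis
    proof
      assume "int p dvd coeff a 0"
      from eisenstein_no_factor[of "int p" a b "Psi p", OF _ ab[symmetric] d PC(1-3) this] pr show ?thesis by simp
    next
      assume "int p dvd coeff b 0"
      from eisenstein_no_factor[of "int p" b a "Psi p", OF _ _ d(2,1) PC(1-3) this] pr ab show ?thesis
        by (simp add: mult.commute)
    qed
  qed
qed

lemma irreducible_Phi: assumes pr: "prime p" shows "irreducible (Phi p :: int poly)"
proof (rule irreducibleI)
  have p1: "p > 1" using prime_gt_1_nat[OF pr] .
  show "Phi p \<noteq> (0::int poly)" using p1 coeff_Phi[of p 0] by (metis less_trans zero_less_one one_neq_zero coeff_0)
  show "\<not> is_unit (Phi p :: int poly)"
  proof
    assume "is_unit (Phi p :: int poly)"
    hence "degree (Phi p :: int poly) = 0" by (auto simp: is_unit_poly_iff)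
    thus False using p1 degree_Phi[of p, where 'a=int] by simp
  qed
  fix a b :: "int poly" assume ab: "Phi p = a * b"
  have "Psi p = pcompose a [:1,1:] * pcompose b [:1,1:]" unfolding Psi_def ab by (rule pcompose_mult)
  hence "is_unit (pcompose a [:1,1:]) \<or> is_unit (pcompose b [:1,1:])"
    using irreducible_Psi[OF pr] by (metis irreducibleD)
  thus "is_unit a \<or> is_unit b"
  proof
    assume u: "is_unit (pcompose a [:1,1:])"
    hence "degree (pcompose a [:1,1:]) = 0" by (auto simp: is_unit_poly_iff)
    hence "degree a = 0" by (simp add: degree_pcompose)
    then obtain c where c: "a = [:c:]" by (metis degree_eq_zeroE)
    thus ?thesis using u by (simp add: pcompose_const)
  next
    assume u: "is_unit (pcompose b [:1,1:])"
    hence "degree (pcompose b [:1,1:]) = 0" by (auto simp: is_unit_poly_iff)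
    hence "degree b = 0" by (simp add: degree_pcompose)
    then obtain c where c: "b = [:c:]" by (metis degree_eq_zeroE)
    thus ?thesis using u by (simp add: pcompose_const)
  qed
qed

lemma Phi_zeta: assumes "prime p" shows "poly (Phi p) (zeta p) = 0"
proof -
  have "\<not> p dvd 1" using assms by (metis prime_gt_1_nat nat_dvd_not_less zero_less_one)
  thus ?thesis using sum_zeta_pow_eq_0[OF assms, of 1] by (simp add: poly_Phi)
qed

lemma Phi_zeta_pow: assumes "prime p" "\<not> p dvd k" shows "poly (Phi p) (zeta p ^ k) = 0"
  using sum_zeta_pow_eq_0[OF assms] by (simp add: poly_Phi)

lemma map_of_int_Phi: "map_poly of_int (Phi p) = (Phi p :: 'a::comm_ring_1 poly)"
  by (intro poly_eqI) (simp add: coeff_map_poly coeff_Phi)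

lemma map_of_rat_Phi: "map_poly of_rat (Phi p) = (Phi p :: 'a::field_char_0 poly)"
  by (intro poly_eqI) (simp add: coeff_map_poly coeff_Phi)

lemma primitive_dvd_of_dvd_smult:
  fixes f g :: "int poly"
  assumes "content f = 1" "a \<noteq> 0" "f dvd smult a g"
  shows "f dvd g"
proof -
  have "fract_poly f dvd smult (to_fract a) (fract_poly g)"
    using fract_poly_dvd[OF assms(3)] by simp
  then have "fract_poly f dvd fract_poly g" using assms(2) by (simp add: dvd_smult_iff)
  then show ?thesis using assms(1) by (rule fract_poly_dvdD)
qed

lemma degree_of_zeta_root_dvd_Phi:
  assumes pr: "prime p" and dvd: "f dvd Phi p" and z: "poly (map_poly of_int f) (zeta p) = 0"
  shows "degree f = p - 1"
proof -
  obtain w where w: "Phi p = f * w" using dvd by (elim dvdE)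
  then have "is_unit f \<or> is_unit w" using irreducible_Phi[OF pr] by (metis irreducibleD)
  moreover have "\<not> is_unit f"
  proof
    assume "is_unit f"
    then obtain c where "f = [:c:]" "c dvd 1" by (auto simp: is_unit_poly_iff)
    then show False using z by (simp add: map_poly_pCons)
  qed
  ultimately have "degree w = 0" by (auto simp: is_unit_poly_iff)
  moreover have "w \<noteq> 0" "f \<noteq> 0"
    using w prime_gt_1_nat[OF pr] coeff_Phi[of p 0, where 'a=int] by auto
  ultimately show ?thesis
    using w prime_gt_1_nat[OF pr] degree_Phi[of p, where 'a=int] by (simp add: degree_mult_eq)
qed

lemma zeta_min_degree:
  assumes pr: "prime p"
  shows "r \<noteq> 0 \<Longrightarrow> poly (map_poly of_int r) (zeta p) = 0 \<Longrightarrow> p - 1 \<le> degree (r::int poly)"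
proof (induction "degree r" arbitrary: r rule: less_induct)
  case less
  show ?case
  proof (rule ccontr)
    assume lt: "\<not> p - 1 \<le> degree r"
    define r' where "r' = primitive_part r"
    have r_eq: "r = smult (content r) r'" unfolding r'_def by simp
    have cr0: "content r \<noteq> 0" using less.prems(1) by simp
    have "poly (map_poly of_int r) (zeta p) = of_int (content r) * poly (map_poly of_int r') (zeta p)"
      by (subst r_eq) (simp add: map_poly_of_int_smult)
    hence r'z: "poly (map_poly of_int r') (zeta p) = 0" using less.prems(2) cr0 by simp
    have dr': "degree r' = degree r" unfolding r'_def by simp
    have cr': "content r' = 1" unfolding r'_def using less.prems(1) by simp
    have r'nz: "r' \<noteq> 0" unfolding r'_def using less.prems(1) by simp
    let ?P = "Phi p :: int poly"
    obtain a q where aq: "a \<noteq> 0" "smult a ?P = r' * q + pseudo_mod ?P r'"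
      using pseudo_mod(1)[OF r'nz] by blast
    have s: "pseudo_mod ?P r' = 0 \<or> degree (pseudo_mod ?P r') < degree r'"
      using pseudo_mod(2)[OF r'nz] by blast
    have Pz: "poly (map_poly of_int ?P) (zeta p) = 0" using Phi_zeta[OF pr] by (simp add: map_of_int_Phi)
    have pm: "pseudo_mod ?P r' = smult a ?P - r' * q" using aq(2) by simp
    have "poly (map_poly of_int (pseudo_mod ?P r')) (zeta p) = 0"
      unfolding pm by (simp add: map_poly_of_int_diff map_poly_of_int_mult map_poly_of_int_smult Pz r'z)
    hence sm: "pseudo_mod ?P r' = 0"
    proof -
      assume z: "poly (map_poly of_int (pseudo_mod ?P r')) (zeta p) = 0"
      show ?thesis
      proof (rule ccontr)
        assume nz: "pseudo_mod ?P r' \<noteq> 0"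
        hence d: "degree (pseudo_mod ?P r') < degree r" using s dr' by simp
        from less.hyps[OF d nz z] d lt show False by simp
      qed
    qed
    have "r' dvd smult a ?P" using aq(2) sm by simp
    then have "r' dvd ?P" using primitive_dvd_of_dvd_smult[OF cr' aq(1)] by blast
    then show False using degree_of_zeta_root_dvd_Phi[OF pr _ r'z] lt dr' by simp
  qed
qed

lemma clear_denominators: "\<exists>c::int. c \<noteq> 0 \<and> (\<exists>t::int poly. map_poly of_int t = smult (of_int c) (s::rat poly))"
proof (induction s)
  case 0
  show ?case by (rule exI[of _ 1]) (auto intro: exI[of _ 0])
next
  case (pCons a s)
  then obtain c' t' where ct: "c' \<noteq> 0" "map_poly of_int t' = smult (of_int c') s" by blast
  obtain n d where nd: "quotient_of a = (n, d)" by (cases "quotient_of a") auto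
  have d: "d > 0" using quotient_of_denom_pos[OF nd] .
  have a: "a = of_int n / of_int d" using quotient_of_div[OF nd] .
  let ?t = "pCons (n * c') (smult d t')"
  have "map_poly of_int ?t = pCons (of_int (n * c')) (smult (of_int d) (smult (of_int c') s))"
    by (simp add: map_poly_pCons map_poly_of_int_smult ct(2))
  also have "\<dots> = smult (of_int (c' * d)) (pCons a s)"
    using d by (simp add: a field_simps)
  finally show ?case using ct(1) d by (intro exI[of _ "c' * d"]) auto
qed

lemma Phi_dvd_of_zeta_root:
  assumes pr: "prime p" and z: "poly (map_poly of_rat f) (zeta p) = 0"
  shows "(Phi p :: rat poly) dvd f"
proof -
  let ?P = "Phi p :: rat poly"
  have p1: "p > 1" using prime_gt_1_nat[OF pr] .
  have Pnz: "?P \<noteq> 0" using p1 degree_Phi[of p, where 'a=rat] coeff_Phi[of p 0, where 'a=rat] by auto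
  define s where "s = f mod ?P"
  have fs: "f = (f div ?P) * ?P + s" unfolding s_def by simp
  have sz: "poly (map_poly of_rat s) (zeta p) = 0"
  proof -
    have "poly (map_poly of_rat f) (zeta p) = poly (map_poly of_rat (f div ?P)) (zeta p) * poly (Phi p) (zeta p)
          + poly (map_poly of_rat s) (zeta p)"
      by (subst fs) (simp add: map_poly_of_rat_add map_poly_of_rat_mult map_of_rat_Phi)
    thus ?thesis using z Phi_zeta[OF pr] by simp
  qed
  have "s = 0"
  proof (rule ccontr)
    assume snz: "s \<noteq> 0"
    hence ds: "degree s < p - 1" using degree_mod_less[OF Pnz, of f] degree_Phi[of p, where 'a=rat] p1
      unfolding s_def by auto
    obtain c t where ct: "c \<noteq> 0" "map_poly of_int t = smult (of_int c) s" using clear_denominators by blast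
    have "degree (map_poly (of_int :: int \<Rightarrow> rat) t) = degree t" by (rule degree_map_poly) simp
    hence dt: "degree t = degree s" using ct by simp
    have tnz: "t \<noteq> 0" using ct snz by auto
    have "poly (map_poly of_int t) (zeta p) = poly (map_poly (of_rat :: rat \<Rightarrow> qbar) (map_poly of_int t)) (zeta p)"
      by (simp add: map_poly_of_rat_of_int)
    also have "\<dots> = of_rat (of_int c) * poly (map_poly of_rat s) (zeta p)"
      by (simp add: ct(2) map_poly_of_rat_smult)
    also have "\<dots> = 0" using sz by simp
    finally have "p - 1 \<le> degree t" using zeta_min_degree[OF pr tnz] by blast
    thus False using dt ds by simp
  qed
  thus ?thesis unfolding s_def by (simp add: mod_eq_0_iff_dvd)
qed

lemma zeta_pow_root_of_zeta_root:
  assumes pr: "prime p" and k: "\<not> p dvd k" and z: "poly (map_poly of_rat f) (zeta p) = 0"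
  shows "poly (map_poly of_rat f) (zeta p ^ k) = 0"
proof -
  obtain w where w: "f = Phi p * w" using Phi_dvd_of_zeta_root[OF pr z] by (elim dvdE)
  show ?thesis unfolding w by (simp add: map_poly_of_rat_mult map_of_rat_Phi Phi_zeta_pow[OF pr k])
qed

definition ev :: "rat poly \<Rightarrow> qbar \<Rightarrow> qbar" where "ev f x = poly (map_poly of_rat f) x"

lemma ev_add: "ev (f + g) x = ev f x + ev g x" unfolding ev_def by (simp add: map_poly_of_rat_add)
lemma ev_diff: "ev (f - g) x = ev f x - ev g x" unfolding ev_def by (simp add: map_poly_of_rat_diff)
lemma ev_mult: "ev (f * g) x = ev f x * ev g x" unfolding ev_def by (simp add: map_poly_of_rat_mult)
lemma ev_smult: "ev (smult c f) x = of_rat c * ev f x" unfolding ev_def by (simp add: map_poly_of_rat_smult)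
lemma ev_pCons: "ev (pCons a f) x = of_rat a + x * ev f x" unfolding ev_def by (simp add: map_poly_pCons)
lemma ev_const: "ev [:a:] x = of_rat a" by (simp add: ev_def map_poly_pCons)
lemma ev_X: "ev [:0,1:] x = x" by (simp add: ev_def map_poly_pCons)
lemma ev_0: "ev 0 x = 0" by (simp add: ev_def)
definition Ecyc :: "nat \<Rightarrow> qbar set" where "Ecyc p = {ev f (zeta p) | f. True}"

lemma EcycI: "y = ev f (zeta p) \<Longrightarrow> y \<in> Ecyc p" unfolding Ecyc_def by blast
lemma EcycE: "y \<in> Ecyc p \<Longrightarrow> (\<And>f. y = ev f (zeta p) \<Longrightarrow> Q) \<Longrightarrow> Q" unfolding Ecyc_def by blast

lemma Ecyc_add: "x \<in> Ecyc p \<Longrightarrow> y \<in> Ecyc p \<Longrightarrow> x + y \<in> Ecyc p"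
  by (metis EcycE EcycI ev_add)
lemma Ecyc_diff: "x \<in> Ecyc p \<Longrightarrow> y \<in> Ecyc p \<Longrightarrow> x - y \<in> Ecyc p"
  by (metis EcycE EcycI ev_diff)
lemma Ecyc_mult: "x \<in> Ecyc p \<Longrightarrow> y \<in> Ecyc p \<Longrightarrow> x * y \<in> Ecyc p"
  by (metis EcycE EcycI ev_mult)
lemma Ecyc_rat: "of_rat q \<in> Ecyc p" by (rule EcycI, rule ev_const[symmetric])
lemma Ecyc_zeta: "zeta p \<in> Ecyc p" by (rule EcycI, rule ev_X[symmetric])
lemma Ecyc_power: "x \<in> Ecyc p \<Longrightarrow> x ^ n \<in> Ecyc p"
  by (induction n) (auto intro: Ecyc_mult simp: Ecyc_rat[of 1, simplified])

lemma ev_in_Ecyc: "x \<in> Ecyc p \<Longrightarrow> ev f x \<in> Ecyc p"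
proof (induction f)
  case 0 thus ?case using Ecyc_rat[of 0 p] by (simp add: ev_0)
next
  case (pCons a f) thus ?case by (simp add: ev_pCons Ecyc_add Ecyc_mult Ecyc_rat)
qed

lemma to_ac_eq_of_rat: "(to_ac (q::rat) :: qbar) = of_rat q"
proof (cases q)
  case (Fract a b)
  thus ?thesis by (simp add: Fract_of_int_quotient of_rat_divide)
qed

lemma inverse_Ecyc_of_root:
  assumes y: "y \<in> Ecyc p" "y \<noteq> 0"
  shows "h \<noteq> 0 \<Longrightarrow> ev h y = 0 \<Longrightarrow> inverse y \<in> Ecyc p"
proof (induction "degree h" arbitrary: h rule: less_induct)
  case less
  obtain h0 w where hw: "h = pCons h0 w" by (cases h) auto
  show ?case
  proof (cases "h0 = 0")
    case True
    hence wnz: "w \<noteq> 0" using less.prems hw by auto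
    have "y * ev w y = 0" using less.prems(2) hw True by (simp add: ev_pCons)
    hence "ev w y = 0" using y(2) by simp
    moreover have "degree w < degree h" using hw wnz by (simp add: degree_pCons_eq)
    ultimately show ?thesis using less.hyps wnz by blast
  next
    case False
    have "of_rat h0 + y * ev w y = 0" using less.prems(2) hw by (simp add: ev_pCons)
    hence "y * (- ev w y / of_rat h0) = 1" using False by (simp add: field_simps add_eq_0_iff)
    hence "inverse y = - ev w y / of_rat h0" by (metis inverse_unique)
    also have "\<dots> = of_rat (- inverse h0) * ev w y" by (simp add: of_rat_minus of_rat_inverse divide_inverse)
    also have "\<dots> = ev (smult (- inverse h0) w) y" by (simp only: ev_smult)
    finally show ?thesis using ev_in_Ecyc[OF y(1)] by simp
  qed
qed

lemma inverse_Ecyc: assumes "y \<in> Ecyc p" shows "inverse y \<in> Ecyc p"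
proof (cases "y = 0")
  case True thus ?thesis using Ecyc_rat[of 0 p] by simp
next
  case False
  obtain h :: "rat poly" where h: "h \<noteq> 0" "poly (map_poly to_ac h) y = 0" using alg_closure_algebraic by blast
  have "map_poly to_ac h = map_poly of_rat h" by (intro map_poly_cong) (simp add: to_ac_eq_of_rat)
  hence "ev h y = 0" using h(2) unfolding ev_def by simp
  thus ?thesis using inverse_Ecyc_of_root[OF assms False h(1)] by blast
qed

lemma subfield_Ecyc: "is_subfield (Ecyc p)"
  unfolding is_subfield_def
  using Ecyc_rat[of 0 p] Ecyc_rat[of 1 p] by (auto intro: Ecyc_add Ecyc_diff Ecyc_mult inverse_Ecyc)

lemma subfield_rat: assumes "is_subfield K" shows "of_rat q \<in> K"
proof -
  have n: "of_nat n \<in> K" for n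
    by (induction n) (use assms in \<open>auto simp: is_subfield_def\<close>)
  have i: "of_int n \<in> K" for n
  proof (cases "n \<ge> 0")
    case True thus ?thesis using n[of "nat n"] by (metis of_int_of_nat_eq nat_0_le)
  next
    case False
    have "of_int n = (0::qbar) - of_nat (nat (-n))" using False by simp
    thus ?thesis using n[of "nat (-n)"] assms unfolding is_subfield_def by metis
  qed
  show ?thesis
  proof (cases q)
    case (Fract a b)
    hence "of_rat q = of_int a * inverse (of_int b :: qbar)" by (simp add: of_rat_rat divide_inverse)
    thus ?thesis using i assms unfolding is_subfield_def by metis
  qed
qed

lemma subfield_ev: assumes "is_subfield K" "x \<in> K" shows "ev f x \<in> K"
proof (induction f)
  case 0 thus ?case using assms(1) by (simp add: ev_0 is_subfield_def)
next
  case (pCons a f) thus ?case using assms subfield_rat[OF assms(1), of a]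
    by (simp add: ev_pCons is_subfield_def)
qed

lemma cyclotomic_Ecyc: "cyclotomic_field p = Ecyc p"
proof
  show "cyclotomic_field p \<subseteq> Ecyc p"
    unfolding cyclotomic_field_def gen_field_def using subfield_Ecyc Ecyc_zeta by blast
  show "Ecyc p \<subseteq> cyclotomic_field p"
    unfolding cyclotomic_field_def gen_field_def Ecyc_def using subfield_ev by blast
qed

text \<open>The automorphism \<open>\<zeta> \<mapsto> \<zeta>\<^sup>k\<close> of \<open>\<rat>(\<zeta>\<^sub>p)\<close>, evaluated on an arbitrary polynomial representative:
  independent of that choice when \<open>\<not> p dvd k\<close> (\<open>sig_ev\<close>), junk outside \<open>Ecyc p\<close>.\<close>
definition sig :: "nat \<Rightarrow> nat \<Rightarrow> qbar \<Rightarrow> qbar" where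
  "sig p k y = ev (SOME f. y = ev f (zeta p)) (zeta p ^ k)"

lemma sig_ev: assumes pr: "prime p" and k: "\<not> p dvd k" shows "sig p k (ev f (zeta p)) = ev f (zeta p ^ k)"
proof -
  define g where "g = (SOME g. ev f (zeta p) = ev g (zeta p))"
  have "ev f (zeta p) = ev g (zeta p)" unfolding g_def by (rule someI[of _ f]) (rule refl)
  hence "ev (g - f) (zeta p) = 0" by (simp add: ev_diff)
  hence "poly (map_poly of_rat (g - f)) (zeta p) = 0" unfolding ev_def .
  hence "poly (map_poly of_rat (g - f)) (zeta p ^ k) = 0" by (rule zeta_pow_root_of_zeta_root[OF pr k])
  hence "ev (g - f) (zeta p ^ k) = 0" unfolding ev_def .
  hence "ev g (zeta p ^ k) = ev f (zeta p ^ k)" by (simp add: ev_diff)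
  thus ?thesis unfolding sig_def g_def by simp
qed

context
  fixes p :: nat
  assumes pr: "prime p"
begin

lemma sig_add: "\<not> p dvd k \<Longrightarrow> x \<in> Ecyc p \<Longrightarrow> y \<in> Ecyc p \<Longrightarrow> sig p k (x + y) = sig p k x + sig p k y"
  by (elim EcycE) (simp add: ev_add[symmetric] sig_ev[OF pr])

lemma sig_mult: "\<not> p dvd k \<Longrightarrow> x \<in> Ecyc p \<Longrightarrow> y \<in> Ecyc p \<Longrightarrow> sig p k (x * y) = sig p k x * sig p k y"
  by (elim EcycE) (simp add: ev_mult[symmetric] sig_ev[OF pr])

lemma sig_rat: "\<not> p dvd k \<Longrightarrow> sig p k (of_rat q) = of_rat q"
  using sig_ev[OF pr, of k "[:q:]"] by (simp add: ev_const)

lemma sig_zeta: "\<not> p dvd k \<Longrightarrow> sig p k (zeta p) = zeta p ^ k"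
  using sig_ev[OF pr, of k "[:0,1:]"] by (simp add: ev_X)

lemma sig_power: "\<not> p dvd k \<Longrightarrow> x \<in> Ecyc p \<Longrightarrow> sig p k (x ^ n) = sig p k x ^ n"
  by (induction n) (simp_all add: sig_rat[of k 1, simplified] sig_mult Ecyc_power)

lemma sig_ev_gen: "\<not> p dvd k \<Longrightarrow> x \<in> Ecyc p \<Longrightarrow> sig p k (ev f x) = ev f (sig p k x)"
proof (induction f)
  case 0 thus ?case using sig_rat[of k 0] by (simp add: ev_0)
next
  case (pCons a f)
  thus ?case by (simp add: ev_pCons sig_add sig_mult sig_rat Ecyc_rat Ecyc_mult ev_in_Ecyc)
qed

lemma sig_comp:
  assumes k: "\<not> p dvd k" and m: "\<not> p dvd m" and y: "y \<in> Ecyc p"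
  shows "sig p k (sig p m y) = sig p (k * m) y"
proof -
  obtain f where f: "y = ev f (zeta p)" using y by (rule EcycE)
  have km: "\<not> p dvd k * m" using k m pr prime_dvd_mult_iff by blast
  have "sig p k (sig p m y) = sig p k (ev f (zeta p ^ m))" using f sig_ev[OF pr m] by simp
  also have "\<dots> = ev f (sig p k (zeta p ^ m))" using sig_ev_gen[OF k] Ecyc_power[OF Ecyc_zeta] by simp
  also have "sig p k (zeta p ^ m) = zeta p ^ (k * m)"
    using sig_power[OF k Ecyc_zeta] sig_zeta[OF k] by (simp add: power_mult)
  finally show ?thesis using f sig_ev[OF pr km] by simp
qed

lemma sig_one: "y \<in> Ecyc p \<Longrightarrow> sig p 1 y = y"
proof -
  assume "y \<in> Ecyc p"
  then obtain f where f: "y = ev f (zeta p)" by (rule EcycE)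
  have "\<not> p dvd 1" using pr by (metis prime_gt_1_nat nat_dvd_not_less zero_less_one)
  thus ?thesis using f sig_ev[OF pr] by simp
qed

lemma sig_mod: assumes k: "\<not> p dvd k" and y: "y \<in> Ecyc p" shows "sig p k y = sig p (k mod p) y"
proof -
  obtain f where f: "y = ev f (zeta p)" using y by (rule EcycE)
  have k': "\<not> p dvd (k mod p)" using k by (simp add: dvd_mod_iff)
  show ?thesis using f sig_ev[OF pr k] sig_ev[OF pr k'] zeta_pow_mod[OF pr, of k] by simp
qed

lemma Ecyc_fixed_Rats:
  assumes y: "y \<in> Ecyc p" and fx: "\<forall>k\<in>{1..<p}. sig p k y = y"
  shows "y \<in> \<rat>"
proof -
  obtain f where f: "y = ev f (zeta p)" using y by (rule EcycE)
  let ?c = "\<lambda>i. of_rat (coeff f i) :: qbar"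
  have evs: "ev f x = (\<Sum>i\<le>degree f. ?c i * x ^ i)" for x
    unfolding ev_def poly_altdef by (simp add: coeff_map_poly degree_map_poly)
  have kd: "k \<in> {1..<p} \<Longrightarrow> \<not> p dvd k" for k by (auto dest: dvd_imp_le)
  have "(\<Sum>k\<in>{1..<p}. sig p k y) = (\<Sum>k\<in>{1..<p}. y)" using fx by simp
  hence "of_nat (p - 1) * y = (\<Sum>k\<in>{1..<p}. ev f (zeta p ^ k))"
    using f sig_ev[OF pr] kd by simp
  also have "\<dots> = (\<Sum>k\<in>{1..<p}. \<Sum>i\<le>degree f. ?c i * (zeta p ^ i) ^ k)"
    unfolding evs by (simp add: power_mult[symmetric] mult.commute)
  also have "\<dots> = (\<Sum>i\<le>degree f. ?c i * (\<Sum>k\<in>{1..<p}. (zeta p ^ i) ^ k))"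
    by (subst sum.swap) (simp add: sum_distrib_left)
  also have "\<dots> \<in> \<rat>"
  proof (rule Rats_sum, rule Rats_mult)
    fix i show "?c i \<in> \<rat>" by simp
    show "(\<Sum>k\<in>{1..<p}. (zeta p ^ i) ^ k) \<in> \<rat>"
    proof (cases "p dvd i")
      case True thus ?thesis using sum_zeta_pow_dvd[OF pr True] by (metis Rats_of_nat)
    next
      case False
      have "(-1::qbar) \<in> \<rat>" by simp
      thus ?thesis using sum_zeta_pow_units[OF pr False] by metis
    qed
  qed
  finally have "of_nat (p - 1) * y \<in> \<rat>" .
  moreover have "of_nat (p - 1) \<noteq> (0::qbar)" using prime_gt_1_nat[OF pr] by simp
  ultimately show ?thesis by (metis Rats_divide Rats_of_nat nonzero_mult_div_cancel_left)
qed

end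

lemma sig_primroot_fixed:
  assumes pr: "prime p" and g: "residue_primroot p g" and y: "y \<in> Ecyc p" and fx: "sig p g y = y"
  shows "\<forall>k\<in>{1..<p}. sig p k y = y"
proof -
  have p1: "p > 1" using prime_gt_1_nat[OF pr] .
  have cg: "coprime p g" using g by (simp add: residue_primroot_def)
  have ng: "\<not> p dvd g" using cg p1 by (metis coprime_absorb_left nat_dvd_not_less zero_less_one not_less_iff_gr_or_eq coprime_commute dvd_refl)
  have ngj: "\<not> p dvd g ^ j" for j using ng pr by (metis prime_dvd_power)
  have gj: "sig p (g ^ j) y = y" for j
  proof (induction j)
    case 0 thus ?case using sig_one[OF pr y] by simp
  next
    case (Suc j)
    have "sig p (g ^ Suc j) y = sig p g (sig p (g ^ j) y)" using sig_comp[OF pr ng ngj y] by simp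
    thus ?case using Suc fx by simp
  qed
  show ?thesis
  proof
    fix k assume k: "k \<in> {1..<p}"
    have nk: "\<not> p dvd k" using k by (auto dest: dvd_imp_le)
    have "k \<in> totatives p" using k nk pr prime_imp_coprime[OF pr nk]
      by (auto simp: totatives_def coprime_commute)
    moreover have "(\<lambda>i. g ^ i mod p) ` {..<totient p} = totatives p"
      using residue_primroot_is_generator[OF p1 g] unfolding bij_betw_def by blast
    ultimately obtain j where j: "g ^ j mod p = k" by (metis (no_types, lifting) imageE)
    have "sig p k y = sig p (g ^ j mod p) y" using j by simp
    also have "\<dots> = sig p (g ^ j) y" using sig_mod[OF pr ngj y] by simp
    finally show "sig p k y = y" using gj by simp
  qed
qed

lemma quadratic_field_normal_form:
  assumes "quadratic_field K"
  shows "\<exists>a. a \<notin> \<rat> \<and> a * a \<in> \<rat> \<and> K = {of_rat x + of_rat y * a | x y. True}"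
proof -
  obtain b where b: "b \<notin> \<rat>" "K = {of_rat x + of_rat y * b | x y. True}"
    using assms unfolding quadratic_field_def by blast
  have sf: "is_subfield K" using assms unfolding quadratic_field_def by blast
  have bK: "b \<in> K" unfolding b(2) by (rule CollectI, rule exI[of _ 0], rule exI[of _ 1]) simp
  hence "b * b \<in> K" using sf unfolding is_subfield_def by blast
  then obtain u w where uw: "b * b = of_rat u + of_rat w * b" unfolding b(2) by blast
  define a where "a = b - of_rat (w / 2)"
  have "a * a = b * b - of_rat w * b + of_rat (w/2) * of_rat (w/2)"
    unfolding a_def by (simp add: algebra_simps of_rat_divide)
  also have "\<dots> = of_rat (u + (w/2) * (w/2))" using uw by (simp only: of_rat_add of_rat_mult) simp
  finally have aa: "a * a \<in> \<rat>" by simp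
  have an: "a \<notin> \<rat>"
  proof
    assume "a \<in> \<rat>"
    hence "a + of_rat (w/2) \<in> \<rat>" by simp
    thus False using b(1) unfolding a_def by simp
  qed
  have "K = {of_rat x + of_rat y * a | x y. True}"
  proof -
    have "of_rat x + of_rat y * b = of_rat (x + y * (w/2)) + of_rat y * a" for x y
      unfolding a_def by (simp add: of_rat_add of_rat_mult of_rat_divide algebra_simps)
    moreover have "of_rat x + of_rat y * a = of_rat (x - y * (w/2)) + of_rat y * b" for x y
      unfolding a_def by (simp add: of_rat_diff of_rat_mult of_rat_divide algebra_simps)
    ultimately show ?thesis unfolding b(2) by blast
  qed
  thus ?thesis using an aa by blast
qed

lemma sig_square_Rats:
  assumes pr: "prime p" and k: "\<not> p dvd k" and a: "a \<in> Ecyc p" and aa: "a * a \<in> \<rat>"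
  shows "sig p k a = a \<or> sig p k a = - a"
proof -
  obtain r where r: "a * a = of_rat r" using aa by (auto elim: Rats_cases)
  have "sig p k a * sig p k a = a * a" using sig_mult[OF pr k a a] r sig_rat[OF pr k] by simp
  hence "(sig p k a - a) * (sig p k a + a) = 0" by (simp add: algebra_simps)
  hence "sig p k a - a = 0 \<or> sig p k a + a = 0" by simp
  thus ?thesis by (auto simp: eq_neg_iff_add_eq_0)
qed

lemma sig_primroot_neg:
  assumes pr: "prime p" and g: "residue_primroot p g" and a: "a \<in> Ecyc p" and aa: "a * a \<in> \<rat>"
    and an: "a \<notin> \<rat>"
  shows "sig p g a = - a"
proof -
  have p1: "p > 1" using prime_gt_1_nat[OF pr] .
  have cg: "coprime p g" using g by (simp add: residue_primroot_def)
  have ng: "\<not> p dvd g" using cg p1 by (metis coprime_absorb_left nat_dvd_not_less zero_less_one not_less_iff_gr_or_eq coprime_commute dvd_refl)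
  have "sig p g a \<noteq> a"
  proof
    assume "sig p g a = a"
    hence "a \<in> \<rat>" using sig_primroot_fixed[OF pr g a] Ecyc_fixed_Rats[OF pr a] by blast
    with an show False by simp
  qed
  thus ?thesis using sig_square_Rats[OF pr ng a aa] by blast
qed

lemma quadratic_subfield_unique:
  assumes pr: "prime p" and K1: "quadratic_field K1" "K1 \<subseteq> Ecyc p"
    and K2: "quadratic_field K2" "K2 \<subseteq> Ecyc p"
  shows "K1 = K2"
proof -
  obtain g where g: "residue_primroot p g" using prime_primitive_root_exists[OF prime_gt_1_nat[OF pr] pr] by blast
  have p1: "p > 1" using prime_gt_1_nat[OF pr] .
  have cg: "coprime p g" using g by (simp add: residue_primroot_def)
  have ng: "\<not> p dvd g" using cg p1 by (metis coprime_absorb_left nat_dvd_not_less zero_less_one not_less_iff_gr_or_eq coprime_commute dvd_refl)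
  obtain a where a: "a \<notin> \<rat>" "a * a \<in> \<rat>" "K1 = {of_rat x + of_rat y * a | x y. True}" using quadratic_field_normal_form[OF K1(1)] by blast
  obtain b where b: "b \<notin> \<rat>" "b * b \<in> \<rat>" "K2 = {of_rat x + of_rat y * b | x y. True}" using quadratic_field_normal_form[OF K2(1)] by blast
  have aE: "a \<in> Ecyc p" using K1(2) a(3) by (force intro: exI[of _ 0] exI[of _ 1])
  have bE: "b \<in> Ecyc p" using K2(2) b(3) by (force intro: exI[of _ 0] exI[of _ 1])
  have "sig p g (a * b) = a * b"
    using sig_mult[OF pr ng aE bE] sig_primroot_neg[OF pr g aE a(2,1)] sig_primroot_neg[OF pr g bE b(2,1)] by simp
  hence "a * b \<in> \<rat>" using sig_primroot_fixed[OF pr g] Ecyc_fixed_Rats[OF pr] Ecyc_mult[OF aE bE] by blast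
  then obtain r1 where r1: "a * b = of_rat r1" by (auto elim: Rats_cases)
  obtain r2 where r2: "a * a = of_rat r2" using a(2) by (auto elim: Rats_cases)
  have a0: "a \<noteq> 0" using a(1) by auto
  have b0: "b \<noteq> 0" using b(1) by auto
  have r20: "r2 \<noteq> 0" using r2 a0 by auto
  have r10: "r1 \<noteq> 0" using r1 a0 b0 by auto
  have bq: "b = of_rat (r1 / r2) * a"
  proof -
    have "of_rat (r1 / r2) * a = (a * b) * a / (a * a)" using r1 r2 by (simp add: of_rat_divide)
    also have "\<dots> = b" using a0 by (simp add: field_simps)
    finally show ?thesis by simp
  qed
  show ?thesis
  proof -
    have "of_rat x + of_rat y * b = of_rat x + of_rat (y * (r1/r2)) * a" for x y
      unfolding bq by (simp add: of_rat_mult of_rat_divide)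
    moreover have "of_rat x + of_rat y * a = of_rat x + of_rat (y * (r2/r1)) * b" for x y
      unfolding bq using r10 r20 by (simp add: of_rat_mult of_rat_divide field_simps)
    ultimately show ?thesis unfolding a(3) b(3) by blast
  qed
qed

lemma quadratic_norm_nonzero:
  fixes a :: "'a::field_char_0"
  assumes a: "a \<notin> \<rat>" "a * a = of_rat g" and xy: "\<not> (x = 0 \<and> y = 0)"
  shows "x * x - y * y * g \<noteq> 0"
proof
  assume "x * x - y * y * g = 0"
  then have xx: "x * x = y * y * g" by simp
  with xy have y0: "y \<noteq> 0" by auto
  have "of_rat (x / y) * of_rat (x / y) = a * a"
    using xx y0 a(2) by (simp add: of_rat_divide of_rat_mult[symmetric] field_simps)
  then have "(of_rat (x / y) - a) * (of_rat (x / y) + a) = 0" by (simp add: algebra_simps)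
  then have "a = of_rat (x / y) \<or> a = - of_rat (x / y)"
    by (auto simp: eq_neg_iff_add_eq_0 add.commute)
  then show False using a(1) by (auto simp del: of_rat_minus simp: of_rat_minus[symmetric])
qed

lemma quadratic_inverse:
  fixes a :: "'a::field_char_0"
  assumes a: "a \<notin> \<rat>" "a * a = of_rat g" and xy: "\<not> (x = 0 \<and> y = 0)"
  defines "N \<equiv> x * x - y * y * g"
  shows "inverse (of_rat x + of_rat y * a) = of_rat (x / N) + of_rat (- y / N) * a"
proof (rule inverse_unique)
  have N0: "N \<noteq> 0" unfolding N_def by (rule quadratic_norm_nonzero[OF a xy])
  have "(of_rat x + of_rat y * a) * (of_rat (x / N) + of_rat (- y / N) * a)
      = (of_rat x * of_rat x - of_rat y * of_rat y * (a * a)) / of_rat N"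
    using N0 by (simp add: of_rat_divide of_rat_minus field_simps)
  also have "\<dots> = 1"
    using N0 unfolding a(2) N_def by (simp add: of_rat_mult[symmetric] of_rat_diff[symmetric])
  finally show "(of_rat x + of_rat y * a) * (of_rat (x / N) + of_rat (- y / N) * a) = 1" .
qed

lemma is_subfield_quadratic:
  assumes an: "a \<notin> \<rat>" and aa: "a * a \<in> \<rat>"
  shows "is_subfield {of_rat x + of_rat y * a | x y. True}" (is "is_subfield ?K")
proof -
  obtain g where g: "a * a = of_rat g" using aa by (auto elim: Rats_cases)
  have mem: "of_rat x + of_rat y * a \<in> ?K" for x y by blast
  have z: "0 \<in> ?K" using mem[of 0 0] by simp
  have o: "1 \<in> ?K" using mem[of 1 0] by simp
  have cl: "u + v \<in> ?K \<and> u - v \<in> ?K \<and> u * v \<in> ?K" if uK: "u \<in> ?K" and vK: "v \<in> ?K" for u v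
  proof -
    obtain x y where u: "u = of_rat x + of_rat y * a" using uK by blast
    obtain x' y' where v: "v = of_rat x' + of_rat y' * a" using vK by blast
    have "u + v = of_rat (x + x') + of_rat (y + y') * a" unfolding u v by (simp add: of_rat_add algebra_simps)
    moreover have "u - v = of_rat (x - x') + of_rat (y - y') * a" unfolding u v by (simp add: of_rat_diff algebra_simps)
    moreover have "u * v = of_rat (x * x' + y * y' * g) + of_rat (x * y' + y * x') * a"
    proof -
      have "u * v = of_rat x * of_rat x' + of_rat y * of_rat y' * (a * a) + (of_rat x * of_rat y' + of_rat y * of_rat x') * a"
        unfolding u v by (simp add: algebra_simps)
      thus ?thesis unfolding g by (simp add: of_rat_add of_rat_mult)
    qed
    ultimately show ?thesis by blast
  qed
  have inv: "inverse u \<in> ?K" if uK: "u \<in> ?K" for u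
  proof -
    obtain x y where u: "u = of_rat x + of_rat y * a" using uK by blast
    show ?thesis
    proof (cases "x = 0 \<and> y = 0")
      case True
      then show ?thesis using z u by simp
    next
      case False
      then show ?thesis using quadratic_inverse[OF an g False] unfolding u by blast
    qed
  qed
  show ?thesis unfolding is_subfield_def using z o cl inv by blast
qed

lemma Legendre_values: "Legendre a m \<in> {-1, 0, 1}" unfolding Legendre_def by auto

lemma cong_small_eq:
  assumes "x \<in> {-1,0,1::int}" "y \<in> {-1,0,1}" "[x = y] (mod int p)" "2 < p"
  shows "x = y"
proof (rule ccontr)
  assume ne: "x \<noteq> y"
  have "int p dvd (x - y)" using assms(3) by (simp add: cong_iff_dvd_diff)
  hence "\<bar>int p\<bar> \<le> \<bar>x - y\<bar>" using ne by (intro dvd_imp_le_int) auto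
  moreover have "\<bar>x - y\<bar> \<le> 2" using assms(1,2) by auto
  ultimately show False using assms(4) by simp
qed

lemma Legendre_mult:
  assumes pr: "prime p" and p2: "2 < p"
  shows "Legendre (a*b) (int p) = Legendre a (int p) * Legendre b (int p)"
proof -
  let ?e = "(p - 1) div 2"
  have "[Legendre (a*b) (int p) = (a*b) ^ ?e] (mod int p)" by (rule euler_criterion[OF pr p2])
  moreover have "[Legendre a (int p) * Legendre b (int p) = a ^ ?e * b ^ ?e] (mod int p)"
    by (intro cong_mult euler_criterion[OF pr p2])
  ultimately have "[Legendre (a*b) (int p) = Legendre a (int p) * Legendre b (int p)] (mod int p)"
    by (metis cong_sym cong_trans power_mult_distrib)
  moreover have "Legendre a (int p) * Legendre b (int p) \<in> {-1,0,1}"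
    using Legendre_values[of a "int p"] Legendre_values[of b "int p"] by auto
  ultimately show ?thesis using cong_small_eq Legendre_values p2 by blast
qed

lemma Legendre_mod: "Legendre (a mod int p) (int p) = Legendre a (int p)"
  unfolding Legendre_def by (simp add: cong_def QuadRes_mod)

lemma Legendre_square: assumes "\<not> int p dvd a" shows "Legendre a (int p) * Legendre a (int p) = 1"
proof -
  have "\<not> [a = 0] (mod int p)" using assms by (simp add: cong_0_iff)
  thus ?thesis unfolding Legendre_def by auto
qed

lemma Legendre_nonres: assumes "\<not> int p dvd a" "\<not> QuadRes (int p) a" shows "Legendre a (int p) = -1"
proof -
  have "\<not> [a = 0] (mod int p)" using assms by (simp add: cong_0_iff)
  thus ?thesis using assms unfolding Legendre_def by auto
qed

section \<open>The quadratic subfield \<open>\<rat>(p)\<close>\<close>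

definition Lg :: "nat \<Rightarrow> nat \<Rightarrow> int" where "Lg p k = Legendre (int k) (int p)"

definition gauss_poly :: "nat \<Rightarrow> rat poly" where
  "gauss_poly p = (\<Sum>k\<in>{1..<p}. monom (of_int (Lg p k)) k)"

definition gauss_sum :: "nat \<Rightarrow> qbar" where "gauss_sum p = ev (gauss_poly p) (zeta p)"

lemma ev_monom: "ev (monom c k) x = of_rat c * x ^ k"
  unfolding ev_def by (simp add: map_poly_monom poly_monom)

lemma ev_sum: "ev (sum f S) x = (\<Sum>s\<in>S. ev (f s) x)"
  by (induction S rule: infinite_finite_induct) (simp_all add: ev_0 ev_add)

lemma ev_gauss_poly: "ev (gauss_poly p) x = (\<Sum>k\<in>{1..<p}. of_int (Lg p k) * x ^ k)"
  unfolding gauss_poly_def ev_sum ev_monom by simp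

lemma coeff_gauss_poly: "coeff (gauss_poly p) i = (if i \<in> {1..<p} then of_int (Lg p i) else 0)"
  unfolding gauss_poly_def by (simp add: coeff_sum coeff_monom)

lemma Lg_1: "prime p \<Longrightarrow> Lg p 1 = 1"
proof -
  assume pr: "prime p"
  have "\<not> [1 = 0] (mod int p)" using prime_nat_int_gt_1[OF pr] by (simp add: cong_def)
  moreover have "QuadRes (int p) 1" unfolding QuadRes_iff_mod by (rule exI[of _ 1]) simp
  ultimately show ?thesis unfolding Lg_def Legendre_def by simp
qed

lemma gauss_sum_nonzero: assumes pr: "prime p" shows "gauss_sum p \<noteq> 0"
proof
  assume "gauss_sum p = 0"
  hence "poly (map_poly of_rat (gauss_poly p)) (zeta p) = 0" unfolding gauss_sum_def ev_def .
  hence "Phi p dvd gauss_poly p" by (rule Phi_dvd_of_zeta_root[OF pr])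
  then obtain w where w: "gauss_poly p = Phi p * w" by (elim dvdE)
  have p1: "p > 1" using prime_gt_1_nat[OF pr] .
  have c1: "coeff (gauss_poly p) 1 = 1" using p1 Lg_1[OF pr] by (simp add: coeff_gauss_poly)
  hence gnz: "gauss_poly p \<noteq> 0" by auto
  hence wnz: "w \<noteq> 0" and Pnz: "(Phi p :: rat poly) \<noteq> 0" using w by auto
  have "degree (gauss_poly p) \<le> p - 1" by (rule degree_le) (auto simp: coeff_gauss_poly)
  moreover have "degree (gauss_poly p) = (p - 1) + degree w"
    using w wnz Pnz degree_mult_eq[of "Phi p" w] degree_Phi[of p, where 'a=rat] p1 by simp
  ultimately have "degree w = 0" by simp
  then obtain c where c: "w = [:c:]" by (metis degree_eq_zeroE)
  have "coeff (gauss_poly p) 0 = 0" by (simp add: coeff_gauss_poly)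
  moreover have "coeff (gauss_poly p) 0 = c" using w c p1 by (simp add: coeff_Phi)
  ultimately have "c = 0" by simp
  thus False using w c gnz by simp
qed

lemma mult_mod_bij:
  fixes p m :: nat
  assumes pr: "prime p" and m: "\<not> p dvd m"
  shows "bij_betw (\<lambda>k. (m * k) mod p) {1..<p} {1..<p}"
proof -
  let ?h = "\<lambda>k. (m * k) mod p"
  have sub: "?h ` {1..<p} \<subseteq> {1..<p}"
  proof
    fix y assume "y \<in> ?h ` {1..<p}"
    then obtain k where k: "k \<in> {1..<p}" "y = (m * k) mod p" by blast
    have "\<not> p dvd k" using k(1) by (auto simp: nat_dvd_not_less)
    hence "\<not> p dvd m * k" using m pr prime_dvd_mult_iff by blast
    hence "y \<noteq> 0" using k(2) by (simp add: dvd_eq_mod_eq_0)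
    moreover have "y < p" using k(2) prime_gt_1_nat[OF pr] by simp
    ultimately show "y \<in> {1..<p}" by simp
  qed
  have cm: "coprime m p" using prime_imp_coprime[OF pr m] by (simp add: coprime_commute)
  have inj: "inj_on ?h {1..<p}"
  proof
    fix x y assume xy: "x \<in> {1..<p}" "y \<in> {1..<p}" "?h x = ?h y"
    hence "[m * x = m * y] (mod p)" by (simp add: cong_def)
    hence "[x = y] (mod p)" using cong_mult_lcancel_nat[OF cm] by simp
    thus "x = y" using xy(1,2) by (auto intro: cong_less_modulus_unique_nat)
  qed
  have "?h ` {1..<p} = {1..<p}" by (rule endo_inj_surj) (use sub inj in auto)
  thus ?thesis using inj unfolding bij_betw_def by blast
qed

lemma sig_gauss_sum:
  assumes pr: "prime p" and p2: "2 < p" and m: "\<not> p dvd m"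
  shows "sig p m (gauss_sum p) = of_int (Lg p m) * gauss_sum p"
proof -
  let ?h = "\<lambda>k. (m * k) mod p"
  let ?F = "\<lambda>j. of_int (Lg p j) * zeta p ^ j :: qbar"
  have mi: "\<not> int p dvd int m" using m by simp
  have Lk: "Lg p k = Lg p m * Lg p (?h k)" for k
  proof -
    have "Lg p (?h k) = Legendre (int m * int k) (int p)"
      unfolding Lg_def using Legendre_mod[of "int m * int k" p] by (simp add: zmod_int of_nat_mult)
    also have "\<dots> = Lg p m * Lg p k" unfolding Lg_def by (rule Legendre_mult[OF pr p2])
    finally have "Lg p m * Lg p (?h k) = (Lg p m * Lg p m) * Lg p k" by (simp add: ac_simps)
    thus ?thesis using Legendre_square[OF mi] unfolding Lg_def by simp
  qed
  have "sig p m (gauss_sum p) = ev (gauss_poly p) (zeta p ^ m)" unfolding gauss_sum_def by (rule sig_ev[OF pr m])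
  also have "\<dots> = (\<Sum>k\<in>{1..<p}. of_int (Lg p k) * (zeta p ^ m) ^ k)" by (rule ev_gauss_poly)
  also have "\<dots> = (\<Sum>k\<in>{1..<p}. of_int (Lg p m) * ?F (?h k))"
  proof (rule sum.cong[OF refl])
    fix k
    have "(zeta p ^ m) ^ k = zeta p ^ (?h k)" using zeta_pow_mod[OF pr, of "m * k"] by (simp add: power_mult)
    thus "of_int (Lg p k) * (zeta p ^ m) ^ k = of_int (Lg p m) * ?F (?h k)" by (subst Lk) simp
  qed
  also have "\<dots> = of_int (Lg p m) * (\<Sum>k\<in>{1..<p}. ?F (?h k))" by (simp add: sum_distrib_left)
  also have "(\<Sum>k\<in>{1..<p}. ?F (?h k)) = (\<Sum>k\<in>{1..<p}. ?F k)"
    by (rule sum.reindex_bij_betw[OF mult_mod_bij[OF pr m]])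
  also have "\<dots> = gauss_sum p" unfolding gauss_sum_def ev_gauss_poly ..
  finally show ?thesis .
qed

lemma gauss_sum_quadratic:
  assumes pr: "prime p" and p2: "2 < p" and n: "\<not> p dvd n" "Lg p n = -1"
  shows "gauss_sum p \<in> Ecyc p" "gauss_sum p \<notin> \<rat>" "gauss_sum p * gauss_sum p \<in> \<rat>"
proof -
  show GE: "gauss_sum p \<in> Ecyc p" unfolding gauss_sum_def by (rule EcycI) (rule refl)
  show "gauss_sum p \<notin> \<rat>"
  proof
    assume "gauss_sum p \<in> \<rat>"
    then obtain r where r: "gauss_sum p = of_rat r" by (auto elim: Rats_cases)
    have "sig p n (gauss_sum p) = gauss_sum p" using r sig_rat[OF pr n(1)] by simp
    moreover have "sig p n (gauss_sum p) = - gauss_sum p" using sig_gauss_sum[OF pr p2 n(1)] n(2) by simp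
    ultimately show False using gauss_sum_nonzero[OF pr] by simp
  qed
  have "\<forall>k\<in>{1..<p}. sig p k (gauss_sum p * gauss_sum p) = gauss_sum p * gauss_sum p"
  proof
    fix k assume k: "k \<in> {1..<p}"
    hence nk: "\<not> p dvd k" by (auto simp: nat_dvd_not_less)
    have "sig p k (gauss_sum p * gauss_sum p) = of_int (Lg p k * Lg p k) * (gauss_sum p * gauss_sum p)"
      using sig_mult[OF pr nk GE GE] sig_gauss_sum[OF pr p2 nk] by (simp add: algebra_simps)
    moreover have "Lg p k * Lg p k = 1" unfolding Lg_def by (rule Legendre_square) (use nk in simp)
    ultimately show "sig p k (gauss_sum p * gauss_sum p) = gauss_sum p * gauss_sum p" by simp
  qed
  thus "gauss_sum p * gauss_sum p \<in> \<rat>" using Ecyc_fixed_Rats[OF pr Ecyc_mult[OF GE GE]] by blast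
qed

theorem Qp_quadratic:
  assumes pr: "prime p" and p2: "2 < p" and v: "v \<in> {1..<int p}" "\<not> QuadRes (int p) v"
  shows "\<exists>a. a \<notin> \<rat> \<and> a * a \<in> \<rat> \<and> Qp p = {of_rat x + of_rat y * a | x y. True}"
proof -
  define n where "n = nat v"
  have nv: "int n = v" using v(1) unfolding n_def by simp
  have nd: "\<not> p dvd n" using v(1) nv by (auto simp: nat_dvd_not_less)
  have Ln: "Lg p n = -1" unfolding Lg_def nv
    by (rule Legendre_nonres) (use v nv nd in \<open>auto simp: int_dvd_int_iff[symmetric]\<close>)
  note G = gauss_sum_quadratic[OF pr p2 nd Ln]
  let ?K = "{of_rat x + of_rat y * gauss_sum p | x y. True}"
  have qK: "quadratic_field ?K" unfolding quadratic_field_def using is_subfield_quadratic[OF G(2,3)] G(2) by blast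
  have KE: "?K \<subseteq> Ecyc p" using G(1) by (auto intro: Ecyc_add Ecyc_mult Ecyc_rat)
  have ex1: "\<exists>!K. quadratic_field K \<and> K \<subseteq> cyclotomic_field p"
    unfolding cyclotomic_Ecyc using qK KE quadratic_subfield_unique[OF pr] by blast
  have "quadratic_field (Qp p) \<and> Qp p \<subseteq> cyclotomic_field p"
    unfolding Qp_def by (rule theI'[OF ex1])
  thus ?thesis using quadratic_field_normal_form by blast
qed

lemma quadratic_Gal_iff:
  assumes "a * a \<in> \<rat>" "K = {of_rat x + of_rat y * a | x y. True}" "\<sigma> \<in> GQ"
  shows "\<sigma> \<in> Gal K \<longleftrightarrow> \<sigma> a = a"
proof
  have "a \<in> K" using assms(2) by (force intro: exI[of _ 0] exI[of _ 1])
  then show "\<sigma> \<in> Gal K \<Longrightarrow> \<sigma> a = a" unfolding Gal_def by blast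
  show "\<sigma> a = a \<Longrightarrow> \<sigma> \<in> Gal K"
    using assms(3) unfolding assms(2) Gal_def by (auto simp: GQ_add GQ_mult GQ_of_rat)
qed

lemma quadratic_conj:
  assumes "a * a \<in> \<rat>" "\<sigma> \<in> GQ"
  shows "\<sigma> a = a \<or> \<sigma> a = - a"
proof -
  obtain r where r: "a * a = of_rat r" using assms(1) by (auto elim: Rats_cases)
  have "\<sigma> a * \<sigma> a = a * a" using GQ_mult[OF assms(2), of a a] r GQ_of_rat[OF assms(2)] by simp
  then have "(\<sigma> a - a) * (\<sigma> a + a) = 0" by (simp add: algebra_simps)
  then show ?thesis by (auto simp: eq_neg_iff_add_eq_0)
qed

lemma index_two_Gal_quadratic:
  assumes a: "a \<notin> \<rat>" "a * a \<in> \<rat>" and K: "K = {of_rat x + of_rat y * a | x y. True}"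
    and c: "c \<in> GQ" "c \<notin> Gal K"
  shows "index_two_subgroup (Gal K) GQ_group"
proof -
  have "a \<noteq> - a" using a(1) by auto
  have "\<sigma> \<circ> \<tau> \<in> Gal K" if "\<sigma> \<in> GQ - Gal K" "\<tau> \<in> GQ - Gal K" for \<sigma> \<tau>
  proof -
    have "\<sigma> a = - a" "\<tau> a = - a"
      using that quadratic_conj[OF a(2)] quadratic_Gal_iff[OF a(2) K] by auto
    then have "(\<sigma> \<circ> \<tau>) a = a" using that by (simp add: GQ_uminus)
    then show ?thesis using that GQ_comp quadratic_Gal_iff[OF a(2) K] by simp
  qed
  then show ?thesis
    unfolding index_two_subgroup_def using subgroup_Gal c by auto
qed

section \<open>Twists of \<open>X(p)\<close> defined over \<open>\<rat>\<close>\<close>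

locale twist_setting =
  fixes p :: nat and v :: int and F :: "qbar set" and c :: "qbar \<Rightarrow> qbar"
    and \<rho> :: "(qbar \<Rightarrow> qbar) \<Rightarrow> m2 set"
  assumes prime: "prime p" and odd: "2 < p"
    and v: "v \<in> {1..<int p}" and v_nonres: "\<not> QuadRes (int p) v"
    and number_field: "number_field F" and Qp_subset: "Qp p \<subseteq> F"
    and c: "c \<in> GQ" "c \<notin> Gal (Qp p)"
    and \<rho>_hom: "\<rho> \<in> hom (GQ_group\<lparr>carrier := Gal F\<rparr>) (PG p)"
    and \<rho>_continuous: "krull_continuous (Gal F) \<rho>"
begin

abbreviation "G \<equiv> PG p"
abbreviation "S \<equiv> PSL2 p"
abbreviation "H \<equiv> Gal (Qp p)"
abbreviation "\<Gamma> \<equiv> GQ_group"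
abbreviation "\<eta> \<equiv> eta p v"
abbreviation "J \<equiv> Jm p"
abbreviation "V \<equiv> Vmat p v"

sublocale G: group G by (rule group_PG[OF prime])
sublocale \<Gamma>: group \<Gamma> by (rule group_GQ_group)

lemma S_index_two: "index_two_subgroup S G"
  using index_two_PSL2[OF prime odd v v_nonres] .

lemma S_subgroup: "subgroup S G"
  using index_two_subgroup_is_subgroup[OF S_index_two] .

lemma S_carrier: "x \<in> S \<Longrightarrow> x \<in> carrier G"
  by (rule subgroup.mem_carrier[OF S_subgroup])

lemma H_index_two: "index_two_subgroup H \<Gamma>"
proof -
  obtain a where "a \<notin> \<rat>" "a * a \<in> \<rat>" "Qp p = {of_rat x + of_rat y * a | x y. True}"
    using Qp_quadratic[OF prime odd v v_nonres] by blast
  then show ?thesis using index_two_Gal_quadratic c by blast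
qed

lemma H_subgroup: "subgroup H \<Gamma>"
  using index_two_subgroup_is_subgroup[OF H_index_two] .

lemma c_in: "c \<in> carrier \<Gamma> - H" using c by simp

lemma F_sub_H: "Gal F \<subseteq> H" using Gal_mono[OF Qp_subset] .

lemma J_in: "J \<in> S" using Jm_PSL2[OF prime] .

lemma V_in: "V \<in> carrier G - S"
  using Vmat_nonPSL2[OF prime v v_nonres] by (simp add: PG_simps)

lemma eta_eq: "\<eta> = (\<lambda>\<sigma>. if \<sigma> \<in> H then \<one>\<^bsub>G\<^esub> else V)"
  by (rule ext) (simp add: eta_def PG_simps)

lemma eta_hom: "\<eta> \<in> hom \<Gamma> G"
  unfolding eta_eq
  using G.index_two_sign_hom[OF group_GQ_group H_index_two] V_in Vmat_sq[OF prime v]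
  by (simp add: PG_simps)

lemma gact_eq: "gact p v \<sigma> x = \<eta> \<sigma> \<otimes>\<^bsub>G\<^esub> x \<otimes>\<^bsub>G\<^esub> inv\<^bsub>G\<^esub> \<eta> \<sigma>"
  using V_in unfolding gact_def eta_eq by (simp add: PG_simps inv_PG[OF prime] G.one_closed[simplified PG_simps])

lemma eta_continuous: "krull_continuous GQ \<eta>"
proof -
  obtain a where a: "a \<notin> \<rat>" "a * a \<in> \<rat>" "Qp p = {of_rat x + of_rat y * a | x y. True}"
    using Qp_quadratic[OF prime odd v v_nonres] by blast
  have "a \<in> Qp p" using a(3) by (force intro: exI[of _ 0] exI[of _ 1])
  then have "krull_continuous GQ (\<lambda>\<sigma>. (\<lambda>b. if b then \<one>\<^bsub>G\<^esub> else V) (\<sigma> \<in> H))"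
    using quadratic_Gal_iff[OF a(2,3)] by (intro krull_continuous_Gal_indicator[of "{a}"]) auto
  then show ?thesis unfolding eta_eq by simp
qed

lemma \<rho>_group_hom: "group_hom (\<Gamma>\<lparr>carrier := Gal F\<rparr>) G \<rho>"
  using \<rho>_hom \<Gamma>.subgroup_imp_group[OF subgroup_Gal] G.group_axioms
  by (simp add: group_hom_def group_hom_axioms_def)

lemma \<rho>_in: "\<sigma> \<in> Gal F \<Longrightarrow> \<rho> \<sigma> \<in> carrier G"
  using \<rho>_hom by (auto simp: hom_def)

lemma \<rho>_id: "\<rho> id = \<one>\<^bsub>G\<^esub>"
  using group_hom.hom_one[OF \<rho>_group_hom] by simp

lemma xi_eq: "\<sigma> \<in> Gal F \<Longrightarrow> xi p v \<rho> \<sigma> = J \<otimes>\<^bsub>G\<^esub> \<rho> \<sigma> \<otimes>\<^bsub>G\<^esub> inv\<^bsub>G\<^esub> J"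
proof -
  assume \<sigma>: "\<sigma> \<in> Gal F"
  have "\<sigma> \<in> GQ" "\<sigma> \<in> H" using \<sigma> F_sub_H Gal_sub by blast+
  then have "\<rho> (inv_into UNIV \<sigma>) = inv\<^bsub>G\<^esub> \<rho> \<sigma>"
    using group_hom.hom_inv[OF \<rho>_group_hom, of \<sigma>] \<sigma> \<Gamma>.m_inv_consistent[OF subgroup_Gal \<sigma>]
    by (simp add: inv_GQ_group)
  then show ?thesis
    using \<open>\<sigma> \<in> H\<close> \<rho>_in[OF \<sigma>] J_in S_subgroup ptrans_pinv[OF prime, of "\<rho> \<sigma>"]
    unfolding xi_def rho_dual_def eta_eq
    by (simp add: PG_mult_eq PG_one_eq PG_carrier_eq PG_inv_eq[OF prime] subgroup.mem_carrier)
qed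

text \<open>An extension of \<open>\<rho>\<close> to \<open>G\<^sub>\<rat>\<close> with cyclotomic determinant: \<open>H = G\<^bsub>\<rat>(p)\<^esub>\<close> is the kernel of
  \<open>\<epsilon>\<^sub>p\<^sup>pr\<close>, so this means mapping \<open>H\<close> into \<open>PSL\<^sub>2\<close> and \<open>c\<close> outside it.\<close>
definition cyclotomic_extension :: "((qbar \<Rightarrow> qbar) \<Rightarrow> m2 set) \<Rightarrow> bool" where
  "cyclotomic_extension \<psi> \<longleftrightarrow> \<psi> \<in> hom \<Gamma> G \<and> \<psi> ` H \<subseteq> S \<and> \<psi> c \<notin> S \<and> (\<forall>\<sigma>\<in>Gal F. \<psi> \<sigma> = \<rho> \<sigma>)"

lemma cyclotomic_extension_outside:
  "cyclotomic_extension \<psi> \<Longrightarrow> \<sigma> \<in> GQ - H \<Longrightarrow> \<psi> \<sigma> \<notin> S"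
  using G.index_two_hom_outside[OF group_GQ_group H_index_two c_in S_subgroup]
  unfolding cyclotomic_extension_def by simp

text \<open>The kernel of such an extension contains the open subgroup of \<open>Gal F\<close> on which \<open>\<rho>\<close> is trivial.\<close>
lemma cyclotomic_extension_continuous:
  assumes "cyclotomic_extension \<psi>"
  shows "krull_continuous GQ \<psi>"
proof -
  obtain T where T: "finite T" "\<And>\<tau>. \<tau> \<in> GQ \<Longrightarrow> \<forall>t\<in>T. \<tau> t = t \<Longrightarrow> \<tau> \<in> Gal F"
    using number_field_fixer[OF number_field] by blast
  obtain T' where T': "finite T'" "\<forall>\<tau>\<in>Gal F. (\<forall>x\<in>T'. \<tau> x = id x) \<longrightarrow> \<rho> \<tau> = \<rho> id"
    using \<rho>_continuous Gal_id unfolding krull_continuous_def by blast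
  show ?thesis
  proof (rule krull_continuous_hom[OF G.group_axioms _ finite_UnI[OF T(1) T'(1)]])
    show "\<psi> \<in> hom \<Gamma> G" using assms unfolding cyclotomic_extension_def by blast
    fix \<tau> assume "\<tau> \<in> GQ" "\<forall>t\<in>T \<union> T'. \<tau> t = t"
    then show "\<psi> \<tau> = \<one>\<^bsub>G\<^esub>" using assms T(2) T'(2) \<rho>_id unfolding cyclotomic_extension_def by simp
  qed
qed

lemma cocycle_iff:
  "cocycle p v GQ z \<longleftrightarrow> krull_continuous GQ z \<and> z ` GQ \<subseteq> S \<and> (\<lambda>\<sigma>. z \<sigma> \<otimes>\<^bsub>G\<^esub> \<eta> \<sigma>) \<in> hom \<Gamma> G"
proof -
  have "z \<in> carrier \<Gamma> \<rightarrow> carrier G" if "z ` GQ \<subseteq> S"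
    using that S_subgroup subgroup.mem_carrier by fastforce
  then show ?thesis
    unfolding cocycle_def using G.cocycle_iff_twisted_hom[OF \<Gamma>.group_axioms eta_hom]
    by (auto simp: PG_mult_eq gact_eq)
qed

lemma J_conj_in_iff: "x \<in> carrier G \<Longrightarrow> J \<otimes>\<^bsub>G\<^esub> x \<otimes>\<^bsub>G\<^esub> inv\<^bsub>G\<^esub> J \<in> S \<longleftrightarrow> x \<in> S"
  using G.subgroup_conj_in_iff[OF S_subgroup subgroup.m_inv_closed[OF S_subgroup J_in]]
    S_carrier[OF J_in] by simp

lemma \<rho>_eq_conj_of_cohomologous:
  assumes \<sigma>: "\<sigma> \<in> Gal F" and b: "b \<in> S" and z: "z \<sigma> \<in> carrier G"
    and \<xi>: "xi p v \<rho> \<sigma> = pmul p (pmul p (pinv p b) (z \<sigma>)) (gact p v \<sigma> b)"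
  shows "\<rho> \<sigma> = inv\<^bsub>G\<^esub> (b \<otimes>\<^bsub>G\<^esub> J) \<otimes>\<^bsub>G\<^esub> z \<sigma> \<otimes>\<^bsub>G\<^esub> (b \<otimes>\<^bsub>G\<^esub> J)"
proof -
  have "\<sigma> \<in> H" using \<sigma> F_sub_H by blast
  then have \<xi>': "J \<otimes>\<^bsub>G\<^esub> \<rho> \<sigma> \<otimes>\<^bsub>G\<^esub> inv\<^bsub>G\<^esub> J = inv\<^bsub>G\<^esub> b \<otimes>\<^bsub>G\<^esub> z \<sigma> \<otimes>\<^bsub>G\<^esub> b"
    using \<xi> S_carrier[OF b] z unfolding xi_eq[OF \<sigma>]
    by (simp add: gact_eq eta_eq PG_mult_eq PG_inv_eq[OF prime] PG_carrier_eq)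
  have "\<rho> \<sigma> = inv\<^bsub>G\<^esub> J \<otimes>\<^bsub>G\<^esub> (J \<otimes>\<^bsub>G\<^esub> \<rho> \<sigma> \<otimes>\<^bsub>G\<^esub> inv\<^bsub>G\<^esub> J) \<otimes>\<^bsub>G\<^esub> J"
    using S_carrier[OF J_in] \<rho>_in[OF \<sigma>] by (simp add: G.m_assoc G.inv_mult_cancel_left)
  also have "\<dots> = inv\<^bsub>G\<^esub> J \<otimes>\<^bsub>G\<^esub> (inv\<^bsub>G\<^esub> b \<otimes>\<^bsub>G\<^esub> z \<sigma> \<otimes>\<^bsub>G\<^esub> b) \<otimes>\<^bsub>G\<^esub> J"
    by (simp only: \<xi>')
  also have "\<dots> = inv\<^bsub>G\<^esub> (b \<otimes>\<^bsub>G\<^esub> J) \<otimes>\<^bsub>G\<^esub> z \<sigma> \<otimes>\<^bsub>G\<^esub> (b \<otimes>\<^bsub>G\<^esub> J)"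
    using z S_carrier[OF b] S_carrier[OF J_in] by (simp add: G.inv_mult_group G.m_assoc)
  finally show ?thesis .
qed

lemma cyclotomic_extension_of_defined_over_Q:
  assumes "defined_over_Q p v F \<rho>"
  obtains \<psi> where "cyclotomic_extension \<psi>"
proof -
  obtain z b where z: "cocycle p v GQ z" and b: "b \<in> S"
    and zb: "\<forall>\<sigma>\<in>Gal F. xi p v \<rho> \<sigma> = pmul p (pmul p (pinv p b) (z \<sigma>)) (gact p v \<sigma> b)"
    using assms by (auto simp: defined_over_Q_def cohomologous_def)
  have zS: "z ` GQ \<subseteq> S" and z\<eta>: "(\<lambda>\<sigma>. z \<sigma> \<otimes>\<^bsub>G\<^esub> \<eta> \<sigma>) \<in> hom \<Gamma> G"
    using z by (simp_all add: cocycle_iff)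
  have z_carrier: "z \<sigma> \<in> carrier G" if "\<sigma> \<in> GQ" for \<sigma> using that zS S_carrier by blast
  define u where "u = b \<otimes>\<^bsub>G\<^esub> J"
  have u: "u \<in> S" unfolding u_def using subgroup.m_closed[OF S_subgroup b J_in] .
  note conj_in = G.subgroup_conj_in_iff[OF S_subgroup u]
  define \<psi> where "\<psi> \<sigma> = inv\<^bsub>G\<^esub> u \<otimes>\<^bsub>G\<^esub> (z \<sigma> \<otimes>\<^bsub>G\<^esub> \<eta> \<sigma>) \<otimes>\<^bsub>G\<^esub> u" for \<sigma>
  have "\<psi> \<in> hom \<Gamma> G" unfolding \<psi>_def using G.conj_hom[OF z\<eta> S_carrier[OF u]] .
  moreover have "\<psi> ` H \<subseteq> S"
  proof
    fix x assume "x \<in> \<psi> ` H"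
    then obtain \<sigma> where \<sigma>: "\<sigma> \<in> H" "x = \<psi> \<sigma>" by blast
    then have "z \<sigma> \<in> S" using zS Gal_sub by blast
    then show "x \<in> S" using \<sigma> conj_in S_carrier unfolding \<psi>_def eta_eq by simp
  qed
  moreover have "\<psi> c \<notin> S"
    using zS S_carrier V_in c conj_in G.subgroup_mult_notin_right[OF S_subgroup]
    unfolding \<psi>_def eta_eq by auto
  moreover have "\<psi> \<sigma> = \<rho> \<sigma>" if \<sigma>: "\<sigma> \<in> Gal F" for \<sigma>
  proof -
    have "\<sigma> \<in> H" "\<sigma> \<in> GQ" using \<sigma> F_sub_H Gal_sub by blast+
    then show ?thesis
      using \<rho>_eq_conj_of_cohomologous[OF \<sigma> b z_carrier] zb \<sigma> z_carrier
      unfolding \<psi>_def eta_eq u_def by simp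
  qed
  ultimately have "cyclotomic_extension \<psi>" unfolding cyclotomic_extension_def by simp
  then show ?thesis by (rule that)
qed

lemma twisted_cyclotomic_extension_in_S:
  assumes \<psi>: "cyclotomic_extension \<psi>" and \<sigma>: "\<sigma> \<in> GQ"
  shows "J \<otimes>\<^bsub>G\<^esub> \<psi> \<sigma> \<otimes>\<^bsub>G\<^esub> inv\<^bsub>G\<^esub> J \<otimes>\<^bsub>G\<^esub> inv\<^bsub>G\<^esub> \<eta> \<sigma> \<in> S"
proof -
  have \<psi>\<sigma>: "\<psi> \<sigma> \<in> carrier G"
    using \<psi> \<sigma> hom_in_carrier unfolding cyclotomic_extension_def by fastforce
  have J: "J \<otimes>\<^bsub>G\<^esub> \<psi> \<sigma> \<otimes>\<^bsub>G\<^esub> inv\<^bsub>G\<^esub> J \<in> carrier G"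
    using \<psi>\<sigma> S_carrier[OF J_in] by simp
  show ?thesis
  proof (cases "\<sigma> \<in> H")
    case True
    have "\<psi> ` H \<subseteq> S" using \<psi> unfolding cyclotomic_extension_def by simp
    then have "J \<otimes>\<^bsub>G\<^esub> \<psi> \<sigma> \<otimes>\<^bsub>G\<^esub> inv\<^bsub>G\<^esub> J \<in> S" using True J_conj_in_iff[OF \<psi>\<sigma>] by blast
    then show ?thesis using True J unfolding eta_eq by simp
  next
    case False
    then have "J \<otimes>\<^bsub>G\<^esub> \<psi> \<sigma> \<otimes>\<^bsub>G\<^esub> inv\<^bsub>G\<^esub> J \<in> carrier G - S"
      using J J_conj_in_iff[OF \<psi>\<sigma>] cyclotomic_extension_outside[OF \<psi>] \<sigma> by simp
    moreover have "inv\<^bsub>G\<^esub> V \<in> carrier G - S"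
      using V_in G.subgroup_inv_notin[OF S_subgroup] by simp
    ultimately show ?thesis
      using G.index_two_mult_in[OF S_index_two] False unfolding eta_eq by simp
  qed
qed

lemma defined_over_Q_of_cyclotomic_extension:
  assumes \<psi>: "cyclotomic_extension \<psi>"
  shows "defined_over_Q p v F \<rho>"
proof -
  have hom: "\<psi> \<in> hom \<Gamma> G" and \<psi>_F: "\<forall>\<sigma>\<in>Gal F. \<psi> \<sigma> = \<rho> \<sigma>"
    using \<psi> unfolding cyclotomic_extension_def by simp_all
  have J: "J \<in> carrier G" "inv\<^bsub>G\<^esub> J \<in> carrier G"
    using S_carrier[OF J_in] by simp_all
  have \<eta>_carrier: "\<eta> \<sigma> \<in> carrier G" for \<sigma> using V_in unfolding eta_eq by simp
  define z where "z = (\<lambda>\<sigma>. (\<lambda>x y. J \<otimes>\<^bsub>G\<^esub> x \<otimes>\<^bsub>G\<^esub> inv\<^bsub>G\<^esub> J \<otimes>\<^bsub>G\<^esub> inv\<^bsub>G\<^esub> y) (\<psi> \<sigma>) (\<eta> \<sigma>))"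
  have z\<eta>: "z \<sigma> \<otimes>\<^bsub>G\<^esub> \<eta> \<sigma> = inv\<^bsub>G\<^esub> (inv\<^bsub>G\<^esub> J) \<otimes>\<^bsub>G\<^esub> \<psi> \<sigma> \<otimes>\<^bsub>G\<^esub> inv\<^bsub>G\<^esub> J" if "\<sigma> \<in> GQ" for \<sigma>
    using that J \<eta>_carrier hom_in_carrier[OF hom] unfolding z_def by (simp add: G.inv_mult_cancel_right)
  have "(\<lambda>\<sigma>. z \<sigma> \<otimes>\<^bsub>G\<^esub> \<eta> \<sigma>) \<in> hom \<Gamma> G"
    by (rule \<Gamma>.hom_restrict[OF G.conj_hom[OF hom J(2)]]) (simp add: z\<eta>)
  moreover have "z ` GQ \<subseteq> S"
    using twisted_cyclotomic_extension_in_S[OF \<psi>] unfolding z_def by blast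
  moreover have "krull_continuous GQ z"
    unfolding z_def
    by (rule krull_continuous_combine[OF cyclotomic_extension_continuous[OF \<psi>] eta_continuous])
  ultimately have "cocycle p v GQ z" by (simp add: cocycle_iff)
  moreover have "cohomologous p v (Gal F) z (xi p v \<rho>)"
    unfolding cohomologous_def
  proof (intro bexI[of _ "pone p"] ballI)
    show "pone p \<in> S" using subgroup.one_closed[OF S_subgroup] by (simp add: PG_one_eq)
    fix \<sigma> assume \<sigma>: "\<sigma> \<in> Gal F"
    then have "\<sigma> \<in> H" using F_sub_H by blast
    then show "xi p v \<rho> \<sigma> = pmul p (pmul p (pinv p (pone p)) (z \<sigma>)) (gact p v \<sigma> (pone p))"
      using \<sigma> \<psi>_F J \<rho>_in[OF \<sigma>] unfolding z_def
      by (simp add: xi_eq gact_eq eta_eq PG_mult_eq PG_one_eq PG_inv_eq[OF prime] PG_carrier_eq)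
  qed
  ultimately show ?thesis unfolding defined_over_Q_def by blast
qed

lemma cyclotomic_extension_restriction:
  assumes \<psi>: "cyclotomic_extension \<psi>"
  shows "\<psi> c \<in> PGL2 p - PSL2 p" "\<forall>\<sigma>\<in>H. \<psi> \<sigma> \<in> PSL2 p"
    "\<forall>\<sigma>\<in>H. \<forall>\<tau>\<in>H. \<psi> (\<sigma> \<circ> \<tau>) = pmul p (\<psi> \<sigma>) (\<psi> \<tau>)" "\<forall>\<sigma>\<in>Gal F. \<psi> \<sigma> = \<rho> \<sigma>"
    "\<psi> (c \<circ> c) = pmul p (\<psi> c) (\<psi> c)"
    "\<forall>\<sigma>\<in>H. \<psi> (inv_into UNIV c \<circ> \<sigma> \<circ> c) = pmul p (pinv p (\<psi> c)) (pmul p (\<psi> \<sigma>) (\<psi> c))"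
proof -
  have hom: "\<psi> \<in> hom \<Gamma> G" using \<psi> unfolding cyclotomic_extension_def by simp
  interpret group_hom \<Gamma> G \<psi> using hom by unfold_locales
  have H: "\<sigma> \<in> GQ" if "\<sigma> \<in> H" for \<sigma> using that Gal_sub by blast
  show "\<psi> c \<in> PGL2 p - PSL2 p" using \<psi> c unfolding cyclotomic_extension_def by (simp add: PG_carrier_eq)
  show "\<forall>\<sigma>\<in>H. \<psi> \<sigma> \<in> PSL2 p" "\<forall>\<sigma>\<in>Gal F. \<psi> \<sigma> = \<rho> \<sigma>"
    using \<psi> unfolding cyclotomic_extension_def by auto
  show "\<forall>\<sigma>\<in>H. \<forall>\<tau>\<in>H. \<psi> (\<sigma> \<circ> \<tau>) = pmul p (\<psi> \<sigma>) (\<psi> \<tau>)" "\<psi> (c \<circ> c) = pmul p (\<psi> c) (\<psi> c)"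
    using H c hom_mult by (simp_all add: PG_mult_eq)
  show "\<forall>\<sigma>\<in>H. \<psi> (inv_into UNIV c \<circ> \<sigma> \<circ> c) = pmul p (pinv p (\<psi> c)) (pmul p (\<psi> \<sigma>) (\<psi> c))"
    using H c hom_mult GQ_inv GQ_comp
    by (simp add: PG_mult_eq PG_carrier_eq PG_inv_eq[OF prime] inv_GQ_group[symmetric] G.m_assoc)
qed

lemma cyclotomic_extension_of_restriction:
  assumes g: "g \<in> PGL2 p - PSL2 p" and r_S: "\<forall>\<sigma>\<in>H. r \<sigma> \<in> PSL2 p"
    and r_mult: "\<forall>\<sigma>\<in>H. \<forall>\<tau>\<in>H. r (\<sigma> \<circ> \<tau>) = pmul p (r \<sigma>) (r \<tau>)" and r_F: "\<forall>\<sigma>\<in>Gal F. r \<sigma> = \<rho> \<sigma>"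
    and r_sq: "r (c \<circ> c) = pmul p g g"
    and r_conj: "\<forall>\<sigma>\<in>H. r (inv_into UNIV c \<circ> \<sigma> \<circ> c) = pmul p (pinv p g) (pmul p (r \<sigma>) g)"
  obtains \<psi> where "cyclotomic_extension \<psi>"
proof -
  have g': "g \<in> carrier G" using g by (simp add: PG_carrier_eq)
  have r: "r \<in> hom (\<Gamma>\<lparr>carrier := H\<rparr>) G"
    using r_S r_mult S_carrier by (auto simp: hom_def PG_mult_eq)
  interpret E: index_two_extension \<Gamma> G H c r g
  proof (intro index_two_extension.intro index_two_extension_axioms.intro)
    show "r (c \<otimes>\<^bsub>\<Gamma>\<^esub> c) = g \<otimes>\<^bsub>G\<^esub> g" using r_sq by (simp add: PG_mult_eq)
    fix h assume "h \<in> H"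
    then show "r (inv\<^bsub>\<Gamma>\<^esub> c \<otimes>\<^bsub>\<Gamma>\<^esub> h \<otimes>\<^bsub>\<Gamma>\<^esub> c) = inv\<^bsub>G\<^esub> g \<otimes>\<^bsub>G\<^esub> r h \<otimes>\<^bsub>G\<^esub> g"
      using r_conj c g' r_S S_carrier
      by (simp add: inv_GQ_group PG_mult_eq PG_carrier_eq PG_inv_eq[OF prime] G.m_assoc)
  qed (use \<Gamma>.group_axioms G.group_axioms H_index_two c_in r g' in simp_all)
  have "cyclotomic_extension E.extension"
    using E.extension_hom E.extension_c E.extension_in g r_S r_F F_sub_H
    unfolding cyclotomic_extension_def by auto
  then show ?thesis by (rule that)
qed

lemma defined_over_Q_iff_cyclotomic_extension:
  "defined_over_Q p v F \<rho> \<longleftrightarrow> (\<exists>\<psi>. cyclotomic_extension \<psi>)"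
  by (metis cyclotomic_extension_of_defined_over_Q defined_over_Q_of_cyclotomic_extension)

lemma cyclotomic_extension_iff_restriction:
  "(\<exists>\<psi>. cyclotomic_extension \<psi>) \<longleftrightarrow>
    (\<exists>g \<in> PGL2 p - PSL2 p. \<exists>r :: (qbar \<Rightarrow> qbar) \<Rightarrow> m2 set.
        (\<forall>\<sigma>\<in>H. r \<sigma> \<in> PSL2 p) \<and> (\<forall>\<sigma>\<in>H. \<forall>\<tau>\<in>H. r (\<sigma> \<circ> \<tau>) = pmul p (r \<sigma>) (r \<tau>)) \<and>
        (\<forall>\<sigma>\<in>Gal F. r \<sigma> = \<rho> \<sigma>) \<and> r (c \<circ> c) = pmul p g g \<and>
        (\<forall>\<sigma>\<in>H. r (inv_into UNIV c \<circ> \<sigma> \<circ> c) = pmul p (pinv p g) (pmul p (r \<sigma>) g)))"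
  (is "_ \<longleftrightarrow> ?restriction")
proof
  assume "\<exists>\<psi>. cyclotomic_extension \<psi>"
  then obtain \<psi> where \<psi>: "cyclotomic_extension \<psi>" ..
  show ?restriction
    using cyclotomic_extension_restriction[OF \<psi>] by (intro bexI[of _ "\<psi> c"] exI[of _ \<psi>] conjI)
next
  assume ?restriction
  then obtain g r where "g \<in> PGL2 p - PSL2 p" "\<forall>\<sigma>\<in>H. r \<sigma> \<in> PSL2 p"
    "\<forall>\<sigma>\<in>H. \<forall>\<tau>\<in>H. r (\<sigma> \<circ> \<tau>) = pmul p (r \<sigma>) (r \<tau>)" "\<forall>\<sigma>\<in>Gal F. r \<sigma> = \<rho> \<sigma>"
    "r (c \<circ> c) = pmul p g g" "\<forall>\<sigma>\<in>H. r (inv_into UNIV c \<circ> \<sigma> \<circ> c) = pmul p (pinv p g) (pmul p (r \<sigma>) g)"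
    by blast
  then obtain \<psi> where "cyclotomic_extension \<psi>" by (rule cyclotomic_extension_of_restriction)
  then show "\<exists>\<psi>. cyclotomic_extension \<psi>" by blast
qed

end

text \<open>Likewise \<open>p \<ge> 7\<close> is only used through \<open>p\<close> being odd.\<close>
theorem proposition4:
  fixes p :: nat and v :: int and F :: "qbar set" and c :: "qbar \<Rightarrow> qbar"
    and \<rho> :: "(qbar \<Rightarrow> qbar) \<Rightarrow> m2 set"
  assumes "prime p" and "p \<ge> 7"
    and "v \<in> {1..<int p}" and "\<not> QuadRes (int p) v"
    and "number_field F" and "Qp p \<subseteq> F"
    and "c \<in> GQ" and "\<exists>x\<in>Qp p. c x \<noteq> x"
    and "\<forall>\<sigma>\<in>Gal F. \<rho> \<sigma> \<in> PGL2 p"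
    and "\<forall>\<sigma>\<in>Gal F. \<forall>\<tau>\<in>Gal F. \<rho> (\<sigma> \<circ> \<tau>) = pmul p (\<rho> \<sigma>) (\<rho> \<tau>)"
    and "krull_continuous (Gal F) \<rho>"
    and "\<forall>\<sigma>\<in>Gal F. QuadRes (int p) (mdet p (rep (\<rho> \<sigma>))) \<longleftrightarrow> QuadRes (int p) (cyc_char p \<sigma>)"
  shows "defined_over_Q p v F \<rho> \<longleftrightarrow>
    (\<exists>g \<in> PGL2 p - PSL2 p. \<exists>r :: (qbar \<Rightarrow> qbar) \<Rightarrow> m2 set.
        (\<forall>\<sigma>\<in>Gal (Qp p). r \<sigma> \<in> PSL2 p) \<and>
        (\<forall>\<sigma>\<in>Gal (Qp p). \<forall>\<tau>\<in>Gal (Qp p). r (\<sigma> \<circ> \<tau>) = pmul p (r \<sigma>) (r \<tau>)) \<and>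
        (\<forall>\<sigma>\<in>Gal F. r \<sigma> = \<rho> \<sigma>) \<and>
        r (c \<circ> c) = pmul p g g \<and>
        (\<forall>\<sigma>\<in>Gal (Qp p). r (inv_into UNIV c \<circ> \<sigma> \<circ> c) = pmul p (pinv p g) (pmul p (r \<sigma>) g)))"
proof -
  interpret twist_setting p v F c \<rho>
  proof
    show "c \<notin> Gal (Qp p)" using assms(8) unfolding Gal_def by auto
    show "\<rho> \<in> hom (GQ_group\<lparr>carrier := Gal F\<rparr>) (PG p)"
      using assms(9,10) by (auto simp: hom_def PG_simps)
  qed (use assms in auto)
  show ?thesis
    by (simp only: defined_over_Q_iff_cyclotomic_extension cyclotomic_extension_iff_restriction)
qed

end
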